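(* Let $0<\varphi<\theta<1$ be constants, $B_1,B_2,\dots$ i.i.d. Bernoulli with $\mathbb{P}(B_i=1)=\theta$, $\hat\Theta_n=\frac1n\sum_{i=1}^nB_i$, and abbreviate $P_{\mathrm{X}}=P_{\mathrm{X},n}(\hat\Theta_n|\varphi)$, $P_{\mathrm{CH}}=P_{\mathrm{CH},n}(\hat\Theta_n|\varphi)$, $P_{\mathrm{PBR}}=P_{\mathrm{PBR},n}(\hat\Theta_n|\varphi)$. If $\theta\ne1/2$, then $$-\sqrt n\log\left(\frac{\sqrt{2\pi\theta(1-\theta)}\,P_{\mathrm{PBR}}}{\sqrt n\,P_{\mathrm{CH}}}\right)\xrightarrow{D}N\left(0,\frac{(1-2\theta)^2}{4\theta(1-\theta)}\right).$$ If $\varphi\ne\theta(2\theta-1)$, then $$-\sqrt n\log\left(\frac{\theta-\varphi}{1-\varphi}\sqrt{\frac{2\pi(1-\theta)}{\theta}}\,\frac{\sqrt n\,P_{\mathrm{X}}}{P_{\mathrm{CH}}}\right)\xrightarrow{D}N\left(0,\frac{(\theta(1-2\theta)+\varphi)^2}{4(\theta-\varphi)^2\theta(1-\theta)}\right).$$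
   Context: Logarithms are natural; $\xrightarrow{D}$ denotes convergence in distribution. For an integer $n\ge1$, $0<\varphi<1$ and $t\in[0,1]$ with $nt$ an integer (convention $0^0=1$): $P_{\mathrm{X},n}(t|\varphi)=\sum_{k\ge nt}\binom{n}{k}\varphi^k(1-\varphi)^{n-k}$; $P_{\mathrm{CH},n}(t|\varphi)=\left(\frac{\varphi}{t}\right)^{nt}\left(\frac{1-\varphi}{1-t}\right)^{n(1-t)}$ if $t\ge\varphi$, and $=1$ otherwise; $P_{\mathrm{PBR},n}(t|\varphi)=\varphi^{nt}(1-\varphi)^{n(1-t)}(n+1)\binom{n}{nt}$ if $t\ge\varphi$, and $=t^{nt}(1-t)^{n(1-t)}(n+1)\binom{n}{nt}$ otherwise. *)

theory Defs
  imports "HOL-Probability.Probability"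
begin

text \<open>For t with n*t an integer, nt is represented as the natural number nat (floor (n*t)).
  Natural-number powers are used so that 0^0 = 1.\<close>

definition P_X :: "nat \<Rightarrow> real \<Rightarrow> real \<Rightarrow> real" where
  "P_X n t \<phi> = (\<Sum>k\<in>{nat \<lceil>real n * t\<rceil>..n}. real (n choose k) * \<phi> ^ k * (1 - \<phi>) ^ (n - k))"

definition P_CH :: "nat \<Rightarrow> real \<Rightarrow> real \<Rightarrow> real" where
  "P_CH n t \<phi> = (if t \<ge> \<phi> then
     (let m = nat \<lfloor>real n * t\<rfloor> in (\<phi> / t) ^ m * ((1 - \<phi>) / (1 - t)) ^ (n - m))
   else 1)"

definition P_PBR :: "nat \<Rightarrow> real \<Rightarrow> real \<Rightarrow> real" where
  "P_PBR n t \<phi> = (let m = nat \<lfloor>real n * t\<rfloor> in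
     (if t \<ge> \<phi> then \<phi> ^ m * (1 - \<phi>) ^ (n - m) else t ^ m * (1 - t) ^ (n - m))
     * real (n + 1) * real (n choose m))"

definition normal_distribution :: "real \<Rightarrow> real \<Rightarrow> real measure" where
  "normal_distribution \<mu> v = density lborel (normal_density \<mu> (sqrt v))"

end

theory Submission
  imports Defs "HOL-Decision_Procs.Approximation_Bounds" "HOL-Real_Asymp.Real_Asymp"
begin

text \<open>Write \<open>t = k/n\<close> for the observed frequency. Stirling's formula with an explicit
  \<open>O(1/k)\<close> error turns \<open>binom n k \<phi>\<^sup>k (1-\<phi>)\<^sup>n\<^sup>-\<^sup>k / P_CH\<close> into
  \<open>1 / sqrt (2\<pi> n t (1-t))\<close>, and the upper tail \<open>P_X\<close> is, up to a relative error \<open>o(1/sqrt n)\<close>,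
  the first binomial term times the geometric factor \<open>1/(1-\<rho>)\<close>, \<open>\<rho> = (1-t)\<phi>/(t(1-\<phi>))\<close>.
  Hence, uniformly for \<open>|t - \<theta>| \<le> \<delta>\<close>, both statistics equal \<open>-sqrt n D (t - \<theta>)\<close> up to
  \<open>O(sqrt n (t-\<theta>)\<^sup>2) + o(1)\<close>, where \<open>D\<close> is the derivative at \<open>t = \<theta>\<close> of the logarithm of the
  leading term of the ratio. By the central limit theorem \<open>sqrt n (t - \<theta>)\<close> is asymptotically
  \<open>N(0, \<theta>(1-\<theta>))\<close>, so \<open>t\<close> stays in the window and the remainder vanishes in probability, and
  Slutsky's lemma gives the limit \<open>N(0, D\<^sup>2 \<theta>(1-\<theta>))\<close> whenever \<open>D \<noteq> 0\<close>.\<close>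

section \<open>Stirling's formula with an explicit error bound\<close>

definition stirling_remainder :: "nat \<Rightarrow> real" where
  "stirling_remainder j = ln (fact j) - (real j + 1/2) * ln (real j) + real j"

lemma ln_add_one_taylor_bounds:
  fixes x :: real assumes "0 \<le> x" "x < 1"
  shows "x - x^2/2 \<le> ln (1 + x)" "ln (1 + x) \<le> x - x^2/2 + x^3/3"
proof -
  have "(\<Sum>i=0..<2*1. (- 1) ^ i * (1 / real (i + 1)) * x ^ (Suc i)) \<le> ln (x + 1)"
    by (rule ln_bounds(1)[OF assms])
  then show "x - x^2/2 \<le> ln (1 + x)" by (simp add: numeral_eq_Suc power2_eq_square add.commute)
  have "ln (x + 1) \<le> (\<Sum>i=0..<2*1+1. (- 1) ^ i * (1 / real (i + 1)) * x ^ (Suc i))"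
    by (rule ln_bounds(2)[OF assms])
  then show "ln (1 + x) \<le> x - x^2/2 + x^3/3"
    by (simp add: numeral_eq_Suc power2_eq_square add.commute power3_eq_cube)
qed

lemma stirling_remainder_diff_le:
  assumes "j \<ge> 1"
  shows "\<bar>stirling_remainder j - stirling_remainder (Suc j)\<bar> \<le> 1 / (real j)^2"
proof -
  have jp: "real j > 0" using assms by simp
  have f: "ln (fact (Suc j) :: real) = ln (real (Suc j)) + ln (fact j)"
    by (simp add: ln_mult del: of_nat_Suc)
  have l0: "1 + 1/real j = real (Suc j) / real j" using jp by (simp add: field_simps)
  have l: "ln (real (Suc j)) = ln (real j) + ln (1 + 1/real j)"
    unfolding l0 using jp by (simp add: ln_div del: of_nat_Suc)
  have e: "stirling_remainder j - stirling_remainder (Suc j) = (real j + 1/2) * ln (1 + 1/real j) - 1"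
    unfolding stirling_remainder_def f l by (simp add: algebra_simps)
  show ?thesis
  proof (cases "j = 1")
    case True
    have "0 < ln (2::real)" "ln (2::real) < 1" using ln_2_less_1 by simp_all
    then show ?thesis unfolding e using True by (simp add: abs_le_iff)
  next
    case False
    then have j2: "real j \<ge> 2" using assms by simp
    define x where "x = 1 / real j"
    have x0: "0 \<le> x" "x < 1" using j2 by (auto simp: x_def)
    have A: "(real j + 1/2) * (x - x^2/2) \<le> (real j + 1/2) * ln (1 + x)"
      using ln_add_one_taylor_bounds(1)[OF x0] jp by (intro mult_left_mono) auto
    have B: "(real j + 1/2) * ln (1 + x) \<le> (real j + 1/2) * (x - x^2/2 + x^3/3)"
      using ln_add_one_taylor_bounds(2)[OF x0] jp by (intro mult_left_mono) auto
    have A': "(real j + 1/2) * (x - x^2/2) - 1 = - 1 / (4 * (real j)^2)"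
      using jp by (simp add: x_def field_simps power2_eq_square)
    have B': "(real j + 1/2) * (x - x^2/2 + x^3/3) - 1 = 1 / (12 * (real j)^2) + 1 / (6 * (real j)^3)"
      using jp by (simp add: x_def field_simps power2_eq_square power3_eq_cube)
    have C1: "1 / (12 * (real j)^2) + 1 / (6 * (real j)^3) \<le> 1 / (real j)^2"
      using j2 by (simp add: field_simps power2_eq_square power3_eq_cube)
    have C2: "1 / (4 * (real j)^2) \<le> 1 / (real j)^2"
      using jp by (simp add: field_simps)
    show ?thesis unfolding e x_def[symmetric] using A B A' B' C1 C2 by linarith
  qed
qed

lemma inverse_square_le_two_diff:
  assumes "j \<ge> 1"
  shows "1 / (real j)^2 \<le> 2 / real j - 2 / real (Suc j)"
proof -
  have jp: "real j \<ge> 1" using assms by simp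
  have "real j * (real j + 1) \<le> 2 * (real j)^2" using jp by (simp add: power2_eq_square algebra_simps)
  then have "1 / (real j)^2 \<le> 2 / (real j * (real j + 1))" using jp by (simp add: divide_simps)
  also have "\<dots> = 2 / real j - 2 / real (Suc j)" using jp by (simp add: field_simps)
  finally show ?thesis .
qed

lemma stirling_remainder_converges:
  "\<exists>c. stirling_remainder \<longlonglongrightarrow> c \<and> (\<forall>j\<ge>1. \<bar>stirling_remainder j - c\<bar> \<le> 2 / real j)"
proof -
  define u where "u m = stirling_remainder (Suc m) - 2 / real (Suc m)" for m
  define v where "v m = stirling_remainder (Suc m) + 2 / real (Suc m)" for m
  have step: "\<bar>stirling_remainder (Suc m) - stirling_remainder (Suc (Suc m))\<bar>
      \<le> 2 / real (Suc m) - 2 / real (Suc (Suc m))" for m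
    using stirling_remainder_diff_le[of "Suc m"] inverse_square_le_two_diff[of "Suc m"] by simp
  have iu: "incseq u"
  proof (rule incseq_SucI)
    show "u m \<le> u (Suc m)" for m using step[of m] unfolding u_def by linarith
  qed
  have dv: "decseq v"
  proof (rule decseq_SucI)
    show "v (Suc m) \<le> v m" for m using step[of m] unfolding v_def by linarith
  qed
  have "u m \<le> v 0" for m
  proof -
    have "u m \<le> v m" by (simp add: u_def v_def)
    also have "\<dots> \<le> v 0" using dv by (simp add: decseq_def)
    finally show ?thesis .
  qed
  then obtain c where uc: "u \<longlonglongrightarrow> c" and ule: "\<And>i. u i \<le> c"
    using incseq_convergent[OF iu] by blast
  have "(\<lambda>m. u m + 4 / real (Suc m)) \<longlonglongrightarrow> c + 0"
    by (intro tendsto_add uc) real_asymp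
  moreover have "v = (\<lambda>m. u m + 4 / real (Suc m))" by (auto simp: u_def v_def fun_eq_iff)
  ultimately have vc: "v \<longlonglongrightarrow> c" by simp
  have vge: "c \<le> v i" for i by (rule decseq_ge[OF dv vc])
  have "(\<lambda>m. u m + 2 / real (Suc m)) \<longlonglongrightarrow> c + 0"
    by (intro tendsto_add uc) real_asymp
  then have "(\<lambda>m. stirling_remainder (Suc m)) \<longlonglongrightarrow> c" by (simp add: u_def)
  then have "stirling_remainder \<longlonglongrightarrow> c" by (rule LIMSEQ_imp_Suc)
  moreover have "\<bar>stirling_remainder j - c\<bar> \<le> 2 / real j" if "j \<ge> 1" for j
  proof -
    obtain m where m: "j = Suc m" using \<open>j \<ge> 1\<close> by (cases j) auto
    show ?thesis using ule[of m] vge[of m] unfolding m u_def v_def by linarith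
  qed
  ultimately show ?thesis by blast
qed

lemma wallis_product_eq:
  "(\<Prod>k=1..n. 4*(real k)^2/(4*(real k)^2 - 1)) = (2^n * fact n)^4 / ((fact (2*n))^2 * (2*real n+1))"
proof (induction n)
  case 0 then show ?case by simp
next
  case (Suc n)
  have step: "A^4/(F^2*(2*a+1)) * (4*(a+1)^2/((2*a+1)*(2*a+3)))
      = (2*A*(a+1))^4/(((2*a+2)*(2*a+1)*F)^2*(2*a+3))"
    if "A > 0" "F > 0" "a \<ge> 0" for A F a :: real
    using that by (simp add: frac_eq_eq add_pos_pos) algebra
  have f2: "(fact (2 * Suc n) :: real) = (2*real n + 2) * (2*real n+1) * fact (2*n)"
    by (simp add: algebra_simps)
  have ff: "(fact (Suc n) :: real) = (real n + 1) * fact n" by simp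
  have e: "4 * (real (Suc n))^2 - 1 = (2*real n + 1) * (2 * real n + 3)"
    by (simp add: algebra_simps power2_eq_square)
  have "(\<Prod>k=1..Suc n. 4*(real k)^2/(4*(real k)^2 - 1))
     = (2^n * fact n)^4 / ((fact (2*n))^2 * (2*real n+1)) * (4*(real n+1)^2/((2*real n+1)*(2*real n+3)))"
    unfolding prod.cl_ivl_Suc Suc.IH e[symmetric] by simp
  also have "\<dots> = (2*(2^n * fact n)*(real n+1))^4/(((2*real n+2)*(2*real n+1)*fact (2*n))^2*(2*real n+3))"
    by (rule step) auto
  also have "\<dots> = (2^Suc n * fact (Suc n))^4 / ((fact (2*Suc n))^2 * (2*real (Suc n)+1))"
    unfolding f2 ff by (simp add: algebra_simps)
  finally show ?case .
qed

lemma stirling_remainder_limit: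
  assumes "stirling_remainder \<longlonglongrightarrow> c"
  shows "c = ln (sqrt (2*pi))"
proof -
  define W where "W n = (\<Prod>k=1..n. 4*(real k)^2/(4*(real k)^2 - 1))" for n
  have eq: "ln (W n) = - ln 2 + 4 * stirling_remainder n - 2 * stirling_remainder (2*n)
      + (ln (real n) - ln (2 * real n + 1))" if "n \<ge> 1" for n
  proof -
    have pos: "(fact n :: real) > 0" "(fact (2*n) :: real) > 0" "(2::real)^n > 0" by auto
    have "ln (W n) = 4 * (real n * ln 2 + ln (fact n)) - 2 * ln (fact (2*n)) - ln (2*real n+1)"
      unfolding W_def wallis_product_eq using pos
      by (simp add: ln_div ln_mult ln_realpow add_pos_pos)
    moreover have "ln (fact (2*n)) = stirling_remainder (2*n)
        + (2*real n + 1/2) * (ln 2 + ln (real n)) - 2 * real n"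
      using that by (simp add: stirling_remainder_def ln_mult)
    ultimately show ?thesis by (simp add: stirling_remainder_def algebra_simps)
  qed
  have "(\<lambda>n. ln (W n)) \<longlonglongrightarrow> ln (pi / 2)"
    unfolding W_def by (intro tendsto_ln wallis) simp
  moreover have "(\<lambda>n. - ln 2 + 4 * stirling_remainder n - 2 * stirling_remainder (2*n)
      + (ln (real n) - ln (2 * real n + 1))) \<longlonglongrightarrow> - ln 2 + 4 * c - 2 * c + (- ln 2)"
  proof (intro tendsto_add tendsto_diff tendsto_mult tendsto_const assms)
    show "(\<lambda>n. stirling_remainder (2*n)) \<longlonglongrightarrow> c"
      using LIMSEQ_subseq_LIMSEQ[OF assms, of "\<lambda>n. 2*n"] by (simp add: strict_mono_def o_def)
    show "(\<lambda>n. ln (real n) - ln (2 * real n + 1)) \<longlonglongrightarrow> - ln 2" by real_asymp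
  qed
  then have "(\<lambda>n. ln (W n)) \<longlonglongrightarrow> - ln 2 + 4 * c - 2 * c + (- ln 2)"
    by (rule Lim_transform_eventually)
      (use eq in \<open>auto intro!: eventually_mono[OF eventually_ge_at_top[of 1]]\<close>)
  ultimately have "ln (pi/2) = - ln 2 + 4 * c - 2 * c + (- ln 2)" by (rule LIMSEQ_unique)
  then have "2 * c = ln 2 + ln pi" by (simp add: ln_div)
  then show ?thesis by (simp add: ln_sqrt ln_mult field_simps)
qed

lemma ln_fact_stirling:
  assumes "j \<ge> 1"
  shows "\<bar>ln (fact j) - ((real j + 1/2) * ln (real j) - real j) - ln (sqrt (2*pi))\<bar> \<le> 2 / real j"
proof -
  obtain c where "stirling_remainder \<longlonglongrightarrow> c" "\<forall>j\<ge>1. \<bar>stirling_remainder j - c\<bar> \<le> 2 / real j"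
    using stirling_remainder_converges by blast
  with stirling_remainder_limit assms show ?thesis
    by (force simp: stirling_remainder_def algebra_simps)
qed

lemma ln_binomial_stirling:
  assumes "1 \<le> k" "k < n"
  shows "\<bar>ln (real (n choose k)) + real k * ln (real k) + real (n-k) * ln (real (n-k))
      - real n * ln (real n) + (ln (2*pi) + ln (real k) + ln (real (n-k)) - ln (real n)) / 2\<bar>
    \<le> 2/real n + 2/real k + 2/real (n-k)"
proof -
  define m where "m = n - k"
  define R where "R j = ln (fact j) - ((real j + 1/2) * ln (real j) - real j) - ln (sqrt (2*pi))" for j
  have R: "\<bar>R j\<bar> \<le> 2 / real j" if "j \<ge> 1" for j
    unfolding R_def using ln_fact_stirling[OF that] .
  have nkm: "real n = real k + real m" using assms by (simp add: m_def)
  have "real (n choose k) = fact n / (fact k * fact m)"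
    using assms by (simp add: binomial_fact m_def)
  then have lnC: "ln (real (n choose k)) = ln (fact n) - ln (fact k) - ln (fact m)"
    by (simp add: ln_div ln_mult)
  have "ln (2*pi) = 2 * ln (sqrt (2*pi))" by (simp add: ln_sqrt)
  then have "ln (real (n choose k)) + real k * ln (real k) + real m * ln (real m)
      - real n * ln (real n) + (ln (2*pi) + ln (real k) + ln (real m) - ln (real n)) / 2
      = R n - R k - R m"
    unfolding lnC R_def using nkm by (simp add: algebra_simps add_divide_distrib diff_divide_distrib)
  moreover have "m \<ge> 1" "n \<ge> 1" using assms by (auto simp: m_def)
  ultimately show ?thesis using R[of n] R[of k] R[of m] assms(1) unfolding m_def by linarith
qed

section \<open>Binomial terms and the upper tail\<close>

definition binom_term :: "nat \<Rightarrow> real \<Rightarrow> nat \<Rightarrow> real" where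
  "binom_term n p j = real (n choose j) * p ^ j * (1 - p) ^ (n - j)"

lemma binom_term_nonneg: "0 \<le> p \<Longrightarrow> p \<le> 1 \<Longrightarrow> 0 \<le> binom_term n p j"
  unfolding binom_term_def by simp

lemma binom_term_pos: "0 < p \<Longrightarrow> p < 1 \<Longrightarrow> j \<le> n \<Longrightarrow> 0 < binom_term n p j"
  unfolding binom_term_def by simp

lemma binom_term_Suc:
  assumes "j < n" "0 < p" "p < 1"
  shows "binom_term n p (Suc j) = binom_term n p j * ((real (n - j) * p) / (real (Suc j) * (1 - p)))"
proof -
  obtain n' where n': "n = Suc n'" using assms by (cases n) auto
  have "Suc j * (n choose Suc j) = (n - j) * (n choose j)"
    unfolding n' Suc_times_binomial using binomial_absorb_comp[of "Suc n'" j] by simp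
  then have b: "real (Suc j) * real (n choose Suc j) = real (n - j) * real (n choose j)"
    by (metis of_nat_mult)
  have e: "(1 - p) ^ (n - j) = (1 - p) * (1 - p) ^ (n - Suc j)"
    using assms by (metis Suc_diff_Suc power_Suc)
  have "binom_term n p (Suc j) * (real (Suc j) * (1 - p))
      = (real (Suc j) * real (n choose Suc j)) * (p * p ^ j * (1 - p) ^ (n - Suc j) * (1 - p))"
    unfolding binom_term_def power_Suc by (simp only: mult_ac)
  also have "\<dots> = binom_term n p j * (real (n - j) * p)"
    unfolding b binom_term_def e by (simp only: mult_ac)
  finally show ?thesis using assms(2,3) by (simp add: field_simps del: of_nat_Suc)
qed

lemma sum_geometric_atMost:
  fixes q :: real assumes "q < 1"
  shows "(\<Sum>i\<in>{0..N}. q^i) = (1 - q^Suc N) / (1 - q)"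
proof -
  have "{0..N} = {..<Suc N}" by auto
  then show ?thesis using sum_gp_strict[of q "Suc N"] assms by simp
qed

lemma binom_term_shift_le:
  assumes p: "0 < p" "p < 1" and k: "1 \<le> k" "k + i \<le> n"
    and \<rho>: "\<rho> = real (n-k) / real k * (p / (1 - p))"
  shows "binom_term n p (k+i) \<le> binom_term n p k * \<rho>^i"
  using k(2)
proof (induction i)
  case 0 then show ?case by simp
next
  case (Suc i)
  define j where "j = k + i"
  have jn: "j < n" using Suc.prems by (simp add: j_def)
  have "real (n - j) * real k \<le> real (n - k) * real (Suc j)"
    using jn k unfolding j_def of_nat_mult[symmetric] of_nat_le_iff by (intro mult_mono) auto
  then have "real (n - j) / real (Suc j) \<le> real (n-k) / real k"
    using k by (simp add: divide_simps)
  then have "real (n - j) / real (Suc j) * (p / (1 - p)) \<le> \<rho>"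
    unfolding \<rho> using p by (intro mult_right_mono) auto
  then have ratio: "(real (n - j) * p) / (real (Suc j) * (1 - p)) \<le> \<rho>"
    by (simp add: field_simps)
  have "binom_term n p (k + Suc i) = binom_term n p j * ((real (n - j) * p) / (real (Suc j) * (1 - p)))"
    using binom_term_Suc[OF jn p] by (simp add: j_def)
  also have "\<dots> \<le> binom_term n p j * \<rho>"
    using ratio binom_term_nonneg[of p n j] p by (intro mult_left_mono) auto
  also have "\<dots> \<le> binom_term n p k * \<rho>^i * \<rho>"
    using Suc \<rho> p k by (intro mult_right_mono) (auto simp: j_def)
  finally show ?case by (simp add: mult_ac)
qed

lemma binom_term_shift_ge:
  assumes p: "0 < p" "p < 1" and k: "1 \<le> k" "k < n" "k + N \<le> n" and i: "i \<le> N"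
    and \<rho>: "\<rho> = real (n-k) / real k * (p / (1 - p))"
    and \<epsilon>: "\<epsilon> = real N * real n / (real k * real (n - k))" "\<epsilon> \<le> 1"
  shows "binom_term n p k * (\<rho> * (1 - \<epsilon>))^i \<le> binom_term n p (k+i)"
  using i
proof (induction i)
  case 0 then show ?case by simp
next
  case (Suc l)
  define q where "q = \<rho> * (1 - \<epsilon>)"
  define a where "a = real k"
  define b where "b = real (n - k)"
  define j where "j = k + l"
  have ab: "a > 0" "b > 0" "real n = a + b" using k by (auto simp: a_def b_def)
  have q0: "0 \<le> q" unfolding q_def \<rho> using p \<epsilon> by simp
  have \<epsilon>0: "0 \<le> \<epsilon>" unfolding \<epsilon> by simp
  have jn: "j < n" using Suc.prems k by (simp add: j_def)
  have lN: "real l + 1 \<le> real N" using Suc.prems by simp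
  have "q \<le> (real (n - j) * p) / (real (Suc j) * (1 - p))"
  proof -
    have nj: "real (n - j) = b - real l" "real (Suc j) = a + real l + 1"
      using jn by (auto simp: a_def b_def j_def of_nat_diff)
    have r1: "\<epsilon> * b * a \<le> \<epsilon> * b * (a + real l + 1)"
      using \<epsilon>0 ab by (intro mult_left_mono) auto
    have r2: "\<epsilon> * b * a = real N * (a + b)"
      unfolding \<epsilon> using ab by (simp add: a_def b_def field_simps)
    have r3: "b * (real l + 1) \<le> b * real N" "real l * a \<le> real N * a"
      using lN ab by (auto intro: mult_left_mono mult_right_mono)
    have "b * (1 - \<epsilon>) * (a + real l + 1) \<le> (b - real l) * a"
      using r1 r2 r3 by (simp add: algebra_simps)
    then have "b * (1 - \<epsilon>) / a \<le> (b - real l) / (a + real l + 1)"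
      using ab by (simp add: divide_simps)
    then have "b * (1 - \<epsilon>) / a * (p / (1 - p)) \<le> (b - real l) / (a + real l + 1) * (p / (1 - p))"
      using p by (intro mult_right_mono) auto
    then show ?thesis unfolding q_def \<rho> nj a_def[symmetric] b_def[symmetric]
      by (simp add: field_simps)
  qed
  then have "binom_term n p k * q^l * q \<le> binom_term n p j * ((real (n - j) * p) / (real (Suc j) * (1 - p)))"
    using Suc q0 binom_term_nonneg[of p n j] p
    by (intro mult_mono) (auto simp: j_def q_def)
  also have "\<dots> = binom_term n p (k + Suc l)"
    using binom_term_Suc[OF jn p] by (simp add: j_def)
  finally show ?case by (simp add: q_def mult_ac)
qed

lemma binom_tail_le:
  assumes p: "0 < p" "p < 1" and k: "1 \<le> k" "k \<le> n"
    and \<rho>: "\<rho> = real (n-k) / real k * (p / (1 - p))" "\<rho> < 1"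
  shows "(\<Sum>j\<in>{k..n}. binom_term n p j) \<le> binom_term n p k / (1 - \<rho>)"
proof -
  have \<rho>0: "0 \<le> \<rho>" unfolding \<rho>(1) using p k by simp
  have "(\<Sum>j\<in>{k..n}. binom_term n p j) = (\<Sum>i\<in>{0..n-k}. binom_term n p (k+i))"
    using sum.atLeastAtMost_shift_0[OF k(2)] by (simp add: o_def)
  also have "\<dots> \<le> (\<Sum>i\<in>{0..n-k}. binom_term n p k * \<rho>^i)"
    by (intro sum_mono binom_term_shift_le[OF p k(1) _ \<rho>(1)]) (use k in auto)
  also have "\<dots> = binom_term n p k * ((1 - \<rho>^Suc (n-k)) / (1 - \<rho>))"
    by (simp add: sum_distrib_left[symmetric] sum_geometric_atMost \<rho>(2))
  also have "\<dots> \<le> binom_term n p k * (1 / (1 - \<rho>))"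
    using \<rho>0 \<rho>(2) binom_term_nonneg[of p n k] p
    by (intro mult_left_mono divide_right_mono) auto
  finally show ?thesis by simp
qed

lemma binom_tail_ge:
  assumes p: "0 < p" "p < 1" and k: "1 \<le> k" "k < n" "k + N \<le> n"
    and \<rho>: "\<rho> = real (n-k) / real k * (p / (1 - p))" "\<rho> < 1"
    and \<epsilon>: "\<epsilon> = real N * real n / (real k * real (n - k))" "\<epsilon> \<le> 1"
  shows "binom_term n p k * ((1 - \<rho>^Suc N) / (1 - \<rho> * (1 - \<epsilon>))) \<le> (\<Sum>j\<in>{k..n}. binom_term n p j)"
proof -
  define q where "q = \<rho> * (1 - \<epsilon>)"
  have \<rho>0: "0 \<le> \<rho>" unfolding \<rho>(1) using p k by simp
  have \<epsilon>0: "0 \<le> \<epsilon>" unfolding \<epsilon>(1) by simp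
  have "q \<le> \<rho>" unfolding q_def using \<rho>0 \<epsilon>0 by (intro mult_left_le) auto
  then have q: "0 \<le> q" "q \<le> \<rho>" "q < 1" using \<rho>0 \<epsilon>0 \<epsilon>(2) \<rho>(2) unfolding q_def by auto
  have "binom_term n p k * ((1 - \<rho>^Suc N) / (1 - q)) \<le> binom_term n p k * ((1 - q^Suc N) / (1 - q))"
    using q binom_term_nonneg[of p n k] p power_mono[of q \<rho> "Suc N"]
    by (intro mult_left_mono divide_right_mono) auto
  also have "\<dots> = (\<Sum>i\<in>{0..N}. binom_term n p k * q^i)"
    by (simp add: sum_distrib_left[symmetric] sum_geometric_atMost q)
  also have "\<dots> \<le> (\<Sum>i\<in>{0..N}. binom_term n p (k+i))"
    unfolding q_def by (intro sum_mono binom_term_shift_ge[OF p k _ \<rho>(1) \<epsilon>]) auto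
  also have "\<dots> = (\<Sum>j\<in>{k..k+N}. binom_term n p j)"
    using sum.atLeastAtMost_shift_0[of k "k+N" "binom_term n p"] by (simp add: o_def)
  also have "\<dots> \<le> (\<Sum>j\<in>{k..n}. binom_term n p j)"
    using k p by (intro sum_mono2) (auto intro: binom_term_nonneg)
  finally show ?thesis unfolding q_def .
qed

lemma ln_one_minus_ge:
  fixes x :: real assumes "0 \<le> x" "x \<le> 1/2"
  shows "- 2 * x \<le> ln (1 - x)"
proof -
  have "- x - 2 * x^2 \<le> ln (1 - x)" using assms by (rule ln_one_minus_pos_lower_bound)
  moreover have "x^2 \<le> x / 2" using assms mult_left_mono[of "2*x" 1 x] by (simp add: power2_eq_square)
  ultimately show ?thesis by linarith
qed

lemma ln_binom_tail_error:
  assumes p: "0 < p" "p < 1" and k: "1 \<le> k" "k < n" "k + N \<le> n"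
    and \<rho>: "\<rho> = real (n-k) / real k * (p / (1 - p))" "\<rho> < 1"
    and \<epsilon>: "\<epsilon> = real N * real n / (real k * real (n - k))" "\<epsilon> \<le> 1"
    and \<rho>N: "\<rho>^Suc N \<le> 1/2"
  shows "\<bar>ln (\<Sum>j\<in>{k..n}. binom_term n p j) - ln (binom_term n p k) + ln (1 - \<rho>)\<bar>
    \<le> \<epsilon> / (1 - \<rho>) + 2 * \<rho>^Suc N"
proof -
  define S where "S = (\<Sum>j\<in>{k..n}. binom_term n p j)"
  define T where "T = binom_term n p k"
  define x where "x = \<rho>^Suc N"
  define q where "q = \<rho> * (1 - \<epsilon>)"
  have \<rho>0: "0 \<le> \<rho>" unfolding \<rho>(1) using p k by simp
  have \<epsilon>0: "0 \<le> \<epsilon>" unfolding \<epsilon>(1) by simp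
  have "q \<le> \<rho>" unfolding q_def using \<rho>0 \<epsilon>0 by (intro mult_left_le) auto
  then have q: "0 \<le> q" "q < 1" using \<rho>0 \<epsilon>0 \<epsilon>(2) \<rho>(2) unfolding q_def by auto
  have T0: "T > 0" unfolding T_def using binom_term_pos p k by auto
  have x0: "0 \<le> x" "x \<le> 1/2" using \<rho>N \<rho>0 by (auto simp: x_def)
  have up: "S \<le> T / (1 - \<rho>)" unfolding S_def T_def using binom_tail_le[OF p k(1) _ \<rho>] k by auto
  have low: "T * ((1 - x) / (1 - q)) \<le> S" unfolding S_def T_def x_def q_def
    by (rule binom_tail_ge[OF p k \<rho> \<epsilon>])
  have lp: "T * ((1 - x) / (1 - q)) > 0" using T0 x0 q by auto
  have S0: "S > 0" using low lp by linarith
  have u: "ln S \<le> ln T - ln (1 - \<rho>)"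
  proof -
    have "ln S \<le> ln (T / (1 - \<rho>))" using up S0 by simp
    also have "\<dots> = ln T - ln (1 - \<rho>)" using T0 \<rho>(2) by (simp add: ln_div)
    finally show ?thesis .
  qed
  have l1: "ln T + ln (1 - x) - ln (1 - q) \<le> ln S"
  proof -
    have "ln (T * ((1 - x) / (1 - q))) \<le> ln S" using low lp by simp
    moreover have "ln (T * ((1 - x) / (1 - q))) = ln T + ln (1 - x) - ln (1 - q)"
      using T0 x0 q by (simp add: ln_mult ln_div)
    ultimately show ?thesis by simp
  qed
  have l2: "ln (1 - q) \<le> ln (1 - \<rho>) + \<epsilon> / (1 - \<rho>)"
  proof -
    define y where "y = \<rho> * \<epsilon> / (1 - \<rho>)"
    have y0: "0 \<le> y" unfolding y_def using \<rho>0 \<epsilon>0 \<rho>(2) by simp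
    have "1 - q = (1 - \<rho>) * (1 + y)" unfolding y_def q_def using \<rho>(2) by (simp add: field_simps)
    then have "ln (1 - q) = ln (1 - \<rho>) + ln (1 + y)" using \<rho>(2) y0 by (simp add: ln_mult)
    moreover have "ln (1 + y) \<le> y" using y0 by (rule ln_add_one_self_le_self)
    moreover have "y \<le> \<epsilon> / (1 - \<rho>)" unfolding y_def
      by (intro divide_right_mono mult_left_le_one_le) (use \<rho>0 \<epsilon> \<epsilon>0 \<rho>(2) in auto)
    ultimately show ?thesis by linarith
  qed
  have l3: "- 2 * x \<le> ln (1 - x)" using x0 by (rule ln_one_minus_ge)
  show ?thesis using u l1 l2 l3 unfolding S_def[symmetric] T_def[symmetric] x_def[symmetric]
    by (simp add: abs_le_iff)
qed

section \<open>Expansion of the two ratios at a lattice point\<close>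

lemma P_CH_pos: "0 < \<phi> \<Longrightarrow> \<phi> < 1 \<Longrightarrow> t < 1 \<Longrightarrow> 0 < P_CH n t \<phi>"
  by (auto simp: P_CH_def Let_def)

lemma P_X_lattice:
  "0 < n \<Longrightarrow> P_X n (real k / real n) \<phi> = (\<Sum>j\<in>{k..n}. binom_term n \<phi> j)"
  by (simp add: P_X_def binom_term_def)

lemma P_PBR_lattice:
  "0 < n \<Longrightarrow> \<phi> \<le> real k / real n \<Longrightarrow> P_PBR n (real k / real n) \<phi> = real (n + 1) * binom_term n \<phi> k"
  by (simp add: P_PBR_def binom_term_def)

lemma P_X_lattice_pos:
  assumes "0 < n" "k \<le> n" "0 < \<phi>" "\<phi> < 1"
  shows "0 < P_X n (real k / real n) \<phi>"
proof -
  have "binom_term n \<phi> k \<le> (\<Sum>j\<in>{k..n}. binom_term n \<phi> j)"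
    by (rule member_le_sum) (use assms in \<open>auto intro: binom_term_nonneg\<close>)
  then show ?thesis using binom_term_pos[of \<phi> k n] assms by (simp add: P_X_lattice)
qed

lemma ln_sub_ln_linearization:
  fixes a t :: real
  assumes "0 < a" "\<bar>t - a\<bar> \<le> a/2"
  shows "\<bar>ln t - ln a - (t - a) / a\<bar> \<le> 2 * ((t - a) / a)\<^sup>2"
proof -
  define x where "x = (t - a) / a"
  have x: "\<bar>x\<bar> \<le> 1/2" using assms by (simp add: x_def abs_divide divide_le_eq)
  have t: "t = a * (1 + x)" using assms(1) by (simp add: x_def field_simps)
  have "1 + x > 0" using x by linarith
  then have "ln t - ln a = ln (1 + x)" unfolding t using assms(1) by (simp add: ln_mult)
  then show ?thesis using abs_ln_one_plus_x_minus_x_bound[OF x] by (simp add: x_def)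
qed

lemma ln_binom_term_div_P_CH:
  assumes \<phi>: "0 < \<phi>" "\<phi> < 1" and k: "1 \<le> k" "k < n" and t: "t = real k / real n" "\<phi> \<le> t"
  shows "\<bar>ln (binom_term n \<phi> k) - ln (P_CH n t \<phi>) + (ln (2*pi) + ln (real n) + ln t + ln (1 - t)) / 2\<bar>
    \<le> 2/real n + 2/real k + 2/real (n-k)"
proof -
  have n0: "n > 0" "real n > 0" using k by auto
  have nk: "real (n - k) > 0" using k by simp
  have omt: "1 - t = real (n - k) / real n" using t(1) k n0 by (simp add: field_simps of_nat_diff)
  have tp: "0 < t" "t < 1" using t(1) k n0 by auto
  have lt: "ln t = ln (real k) - ln (real n)" using t(1) k n0 by (simp add: ln_div)
  have l1t: "ln (1 - t) = ln (real (n - k)) - ln (real n)" using omt nk n0 by (simp add: ln_div)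
  have lB: "ln (binom_term n \<phi> k) = ln (real (n choose k)) + real k * ln \<phi> + real (n-k) * ln (1 - \<phi>)"
    unfolding binom_term_def using \<phi> k by (simp add: ln_mult ln_realpow)
  have "nat \<lfloor>real n * t\<rfloor> = k" using n0 t(1) by simp
  then have "P_CH n t \<phi> = (\<phi> / t) ^ k * ((1 - \<phi>) / (1 - t)) ^ (n - k)"
    unfolding P_CH_def Let_def using t(2) by simp
  then have lC: "ln (P_CH n t \<phi>) = real k * (ln \<phi> - ln t) + real (n-k) * (ln (1 - \<phi>) - ln (1 - t))"
    using \<phi> tp by (simp add: ln_mult ln_realpow ln_div)
  have nl: "real n * ln (real n) = real k * ln (real n) + real (n - k) * ln (real n)"
    using k by (simp add: of_nat_diff algebra_simps)
  have "ln (binom_term n \<phi> k) - ln (P_CH n t \<phi>) + (ln (2*pi) + ln (real n) + ln t + ln (1 - t)) / 2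
      = ln (real (n choose k)) + real k * ln (real k) + real (n-k) * ln (real (n-k))
        - real n * ln (real n) + (ln (2*pi) + ln (real k) + ln (real (n-k)) - ln (real n)) / 2"
    unfolding lB lC lt l1t nl by (simp add: algebra_simps add_divide_distrib diff_divide_distrib)
  then show ?thesis using ln_binomial_stirling[OF k] by simp
qed

lemma ln_PBR_ratio_linearization:
  assumes \<phi>\<theta>: "0 < \<phi>" "\<phi> < \<theta>" "\<theta> < 1" and k: "1 \<le> k" "k < n"
    and t: "t = real k / real n" "\<phi> \<le> t" "\<bar>t - \<theta>\<bar> \<le> \<theta>/2" "\<bar>t - \<theta>\<bar> \<le> (1-\<theta>)/2"
  shows "\<bar>ln (sqrt (2 * pi * \<theta> * (1 - \<theta>)) * P_PBR n t \<phi> / (sqrt (real n) * P_CH n t \<phi>))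
      + (1/\<theta> - 1/(1-\<theta>)) / 2 * (t - \<theta>)\<bar>
    \<le> (1/\<theta>^2 + 1/(1-\<theta>)^2) * (t - \<theta>)^2 + (1/real n + (2/real n + 2/real k + 2/real (n-k)))"
proof -
  have n0: "n > 0" "real n > 0" using k by auto
  have th: "0 < \<theta>" "0 < 1 - \<theta>" "\<phi> < 1" using \<phi>\<theta> by auto
  have tp: "0 < t" "t < 1" using t(1) k n0 by auto
  have PB: "P_PBR n t \<phi> = real (n + 1) * binom_term n \<phi> k"
    using P_PBR_lattice[OF n0(1)] t(1,2) by simp
  have B0: "binom_term n \<phi> k > 0" using binom_term_pos \<phi>\<theta> k th by simp
  have C0: "P_CH n t \<phi> > 0" using P_CH_pos \<phi>\<theta> tp th by simp
  define E where "E = ln (binom_term n \<phi> k) - ln (P_CH n t \<phi>)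
    + (ln (2*pi) + ln (real n) + ln t + ln (1 - t)) / 2"
  have E: "\<bar>E\<bar> \<le> 2/real n + 2/real k + 2/real (n-k)"
    unfolding E_def using ln_binom_term_div_P_CH[OF \<phi>\<theta>(1) th(3) k t(1,2)] .
  define w where "w = ln (real n + 1) - ln (real n)"
  have "real n + 1 = real n * (1 + 1 / real n)" "1 + 1 / real n > 0" using n0 by (simp_all add: field_simps)
  then have "w = ln (1 + 1 / real n)" unfolding w_def using n0 by (simp add: ln_mult)
  then have w: "0 \<le> w" "w \<le> 1 / real n" using n0 by (auto intro: ln_add_one_self_le_self)
  have "ln (sqrt (2 * pi * \<theta> * (1 - \<theta>)) * P_PBR n t \<phi> / (sqrt (real n) * P_CH n t \<phi>))
      = (ln (2*pi) + ln \<theta> + ln (1 - \<theta>)) / 2 + ln (real n + 1) + ln (binom_term n \<phi> k)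
        - ln (real n) / 2 - ln (P_CH n t \<phi>)"
    unfolding PB using th B0 C0 n0 by (simp add: ln_div ln_mult ln_sqrt add_pos_pos)
  also have "\<dots> = - (ln t - ln \<theta>) / 2 - (ln (1 - t) - ln (1 - \<theta>)) / 2 + w + E"
    unfolding w_def E_def by (simp add: algebra_simps add_divide_distrib diff_divide_distrib)
  finally have L: "ln (sqrt (2 * pi * \<theta> * (1 - \<theta>)) * P_PBR n t \<phi> / (sqrt (real n) * P_CH n t \<phi>))
      = - (ln t - ln \<theta>) / 2 - (ln (1 - t) - ln (1 - \<theta>)) / 2 + w + E" .
  have lin: "(1/\<theta> - 1/(1-\<theta>)) / 2 * (t - \<theta>) = (t - \<theta>) / \<theta> / 2 + ((1 - t) - (1 - \<theta>)) / (1 - \<theta>) / 2"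
    using th by (simp add: field_simps)
  define r1 where "r1 = ln t - ln \<theta> - (t - \<theta>) / \<theta>"
  define r2 where "r2 = ln (1 - t) - ln (1 - \<theta>) - ((1 - t) - (1 - \<theta>)) / (1 - \<theta>)"
  have t': "\<bar>t - \<theta>\<bar> \<le> \<theta> / 2" "\<bar>(1 - t) - (1 - \<theta>)\<bar> \<le> (1 - \<theta>) / 2"
    using t(3,4) by (auto simp: abs_minus_commute)
  have r: "\<bar>r1\<bar> \<le> 2 * ((t - \<theta>) / \<theta>)\<^sup>2" "\<bar>r2\<bar> \<le> 2 * (((1 - t) - (1 - \<theta>)) / (1 - \<theta>))\<^sup>2"
    unfolding r1_def r2_def
    using ln_sub_ln_linearization[OF th(1) t'(1)] ln_sub_ln_linearization[OF th(2) t'(2)] by auto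
  have sq: "((t - \<theta>) / \<theta>)\<^sup>2 + (((1 - t) - (1 - \<theta>)) / (1 - \<theta>))\<^sup>2 = (1/\<theta>^2 + 1/(1-\<theta>)^2) * (t - \<theta>)^2"
    using th by (simp add: field_simps power2_eq_square)
  have "ln (sqrt (2 * pi * \<theta> * (1 - \<theta>)) * P_PBR n t \<phi> / (sqrt (real n) * P_CH n t \<phi>))
      + (1/\<theta> - 1/(1-\<theta>)) / 2 * (t - \<theta>) = - r1 / 2 - r2 / 2 + w + E"
    unfolding L lin r1_def r2_def by (simp add: algebra_simps add_divide_distrib diff_divide_distrib)
  moreover define \<eta> where "\<eta> = 2/real n + 2/real k + 2/real (n-k)"
  moreover have "\<bar>E\<bar> \<le> \<eta>" using E unfolding \<eta>_def .
  ultimately show ?thesis unfolding \<eta>_def[symmetric] using r sq w by linarith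
qed

lemma ln_X_ratio_linearization:
  assumes \<phi>\<theta>: "0 < \<phi>" "\<phi> < \<theta>" "\<theta> < 1" and k: "1 \<le> k" "k < n"
    and t: "t = real k / real n" "\<phi> < t" "\<bar>t - \<theta>\<bar> \<le> \<theta>/2" "\<bar>t - \<theta>\<bar> \<le> (1-\<theta>)/2"
      "\<bar>t - \<theta>\<bar> \<le> (\<theta>-\<phi>)/2"
    and tail: "\<bar>ln (P_X n t \<phi>) - ln (binom_term n \<phi> k) + ln (1 - real (n-k) / real k * (\<phi> / (1 - \<phi>)))\<bar> \<le> g"
  shows "\<bar>ln ((\<theta> - \<phi>) / (1 - \<phi>) * sqrt (2 * pi * (1 - \<theta>) / \<theta>) * (sqrt (real n) * P_X n t \<phi>) / P_CH n t \<phi>)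
      + (1/(\<theta>-\<phi>) - 1/(2*\<theta>) - 1/(2*(1-\<theta>))) * (t - \<theta>)\<bar>
    \<le> (2/(\<theta>-\<phi>)^2 + 1/\<theta>^2 + 1/(1-\<theta>)^2) * (t - \<theta>)^2 + (2/real n + 2/real k + 2/real (n-k)) + g"
proof -
  have n0: "n > 0" "real n > 0" using k by auto
  have th: "0 < \<theta>" "0 < 1 - \<theta>" "0 < \<theta> - \<phi>" "\<phi> < 1" using \<phi>\<theta> by auto
  have tp: "0 < t" "t < 1" using t(1) k n0 by auto
  have B0: "binom_term n \<phi> k > 0" using binom_term_pos \<phi>\<theta> k th by simp
  have X0: "P_X n t \<phi> > 0" using P_X_lattice_pos[OF n0(1)] k th t(1) \<phi>\<theta>(1) by simp
  have C0: "P_CH n t \<phi> > 0" using P_CH_pos \<phi>\<theta> tp th by simp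
  have "1 - t = real (n - k) / real n" using t(1) k n0 by (simp add: field_simps of_nat_diff)
  then have rt: "real (n-k) / real k = (1 - t) / t" unfolding t(1) using n0 by simp
  have "1 - real (n-k) / real k * (\<phi> / (1 - \<phi>)) = (t - \<phi>) / (t * (1 - \<phi>))"
    unfolding rt using tp th by (simp add: field_simps)
  then have l\<rho>: "ln (1 - real (n-k) / real k * (\<phi> / (1 - \<phi>))) = ln (t - \<phi>) - ln t - ln (1 - \<phi>)"
    using tp th t(2) by (simp add: ln_div ln_mult)
  define G where "G = ln (P_X n t \<phi>) - ln (binom_term n \<phi> k) + ln (1 - real (n-k) / real k * (\<phi> / (1 - \<phi>)))"
  define E where "E = ln (binom_term n \<phi> k) - ln (P_CH n t \<phi>)
    + (ln (2*pi) + ln (real n) + ln t + ln (1 - t)) / 2"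
  have E: "\<bar>E\<bar> \<le> 2/real n + 2/real k + 2/real (n-k)"
    unfolding E_def using ln_binom_term_div_P_CH[OF \<phi>\<theta>(1) th(4) k t(1)] t(2) by simp
  have "ln ((\<theta> - \<phi>) / (1 - \<phi>) * sqrt (2 * pi * (1 - \<theta>) / \<theta>) * (sqrt (real n) * P_X n t \<phi>) / P_CH n t \<phi>)
      = ln (\<theta> - \<phi>) - ln (1 - \<phi>) + (ln (2*pi) + ln (1 - \<theta>) - ln \<theta>) / 2
        + ln (real n) / 2 + ln (P_X n t \<phi>) - ln (P_CH n t \<phi>)"
    using th X0 C0 n0 by (simp add: ln_div ln_mult ln_sqrt)
  also have "\<dots> = - (ln (t - \<phi>) - ln (\<theta> - \<phi>)) + (ln t - ln \<theta>) / 2 - (ln (1 - t) - ln (1 - \<theta>)) / 2 + E + G"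
    unfolding E_def G_def l\<rho> by (simp add: algebra_simps add_divide_distrib diff_divide_distrib)
  finally have L: "ln ((\<theta> - \<phi>) / (1 - \<phi>) * sqrt (2 * pi * (1 - \<theta>) / \<theta>) * (sqrt (real n) * P_X n t \<phi>) / P_CH n t \<phi>)
      = - (ln (t - \<phi>) - ln (\<theta> - \<phi>)) + (ln t - ln \<theta>) / 2 - (ln (1 - t) - ln (1 - \<theta>)) / 2 + E + G" .
  have lin: "(1/(\<theta>-\<phi>) - 1/(2*\<theta>) - 1/(2*(1-\<theta>))) * (t - \<theta>)
      = ((t - \<phi>) - (\<theta> - \<phi>)) / (\<theta> - \<phi>) - (t - \<theta>) / \<theta> / 2 + ((1 - t) - (1 - \<theta>)) / (1 - \<theta>) / 2"
    using th by (simp add: field_simps)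
  define r1 where "r1 = ln t - ln \<theta> - (t - \<theta>) / \<theta>"
  define r2 where "r2 = ln (1 - t) - ln (1 - \<theta>) - ((1 - t) - (1 - \<theta>)) / (1 - \<theta>)"
  define r3 where "r3 = ln (t - \<phi>) - ln (\<theta> - \<phi>) - ((t - \<phi>) - (\<theta> - \<phi>)) / (\<theta> - \<phi>)"
  have t': "\<bar>(t - \<phi>) - (\<theta> - \<phi>)\<bar> \<le> (\<theta> - \<phi>) / 2" "\<bar>t - \<theta>\<bar> \<le> \<theta> / 2"
    "\<bar>(1 - t) - (1 - \<theta>)\<bar> \<le> (1 - \<theta>) / 2"
    using t(3,4,5) by (auto simp: abs_minus_commute)
  have r: "\<bar>r3\<bar> \<le> 2 * (((t - \<phi>) - (\<theta> - \<phi>)) / (\<theta> - \<phi>))\<^sup>2" "\<bar>r1\<bar> \<le> 2 * ((t - \<theta>) / \<theta>)\<^sup>2"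
      "\<bar>r2\<bar> \<le> 2 * (((1 - t) - (1 - \<theta>)) / (1 - \<theta>))\<^sup>2"
    unfolding r1_def r2_def r3_def
    using ln_sub_ln_linearization[OF th(3) t'(1)] ln_sub_ln_linearization[OF th(1) t'(2)]
      ln_sub_ln_linearization[OF th(2) t'(3)] by auto
  have sq: "2 * (((t - \<phi>) - (\<theta> - \<phi>)) / (\<theta> - \<phi>))\<^sup>2 + ((t - \<theta>) / \<theta>)\<^sup>2 + (((1 - t) - (1 - \<theta>)) / (1 - \<theta>))\<^sup>2
      = (2/(\<theta>-\<phi>)^2 + 1/\<theta>^2 + 1/(1-\<theta>)^2) * (t - \<theta>)^2"
    using th by (simp add: field_simps power2_eq_square)
  have G: "\<bar>G\<bar> \<le> g" using tail unfolding G_def .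
  have "ln ((\<theta> - \<phi>) / (1 - \<phi>) * sqrt (2 * pi * (1 - \<theta>) / \<theta>) * (sqrt (real n) * P_X n t \<phi>) / P_CH n t \<phi>)
      + (1/(\<theta>-\<phi>) - 1/(2*\<theta>) - 1/(2*(1-\<theta>))) * (t - \<theta>) = - r3 + r1 / 2 - r2 / 2 + E + G"
    unfolding L lin r1_def r2_def r3_def by (simp add: algebra_simps add_divide_distrib diff_divide_distrib)
  moreover define \<eta> where "\<eta> = 2/real n + 2/real k + 2/real (n-k)"
  moreover have "\<bar>E\<bar> \<le> \<eta>" using E unfolding \<eta>_def .
  ultimately show ?thesis unfolding \<eta>_def[symmetric] using r sq G by linarith
qed

section \<open>Slutsky's lemma for a standard normal limit\<close>

abbreviation std_normal_cdf :: "real \<Rightarrow> real" where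
  "std_normal_cdf \<equiv> cdf std_normal_distribution"

lemma isCont_std_normal_cdf: "isCont std_normal_cdf x"
proof -
  interpret real_distribution std_normal_distribution by (rule real_dist_normal_dist)
  have "emeasure std_normal_distribution {x}
      = (\<integral>\<^sup>+ y. ennreal (normal_density 0 1 y) * indicator {x} y \<partial>lborel)"
    by (subst emeasure_density) auto
  also have "\<dots> = 0"
    by (subst nn_integral_0_iff_AE) (use AE_lborel_singleton[of x] in \<open>auto elim!: eventually_mono\<close>)
  finally have "measure std_normal_distribution {x} = 0" by (simp add: measure_def)
  then show ?thesis by (simp add: isCont_cdf)
qed

lemma cdf_normal_distribution_zero:
  assumes c: "c > 0"
  shows "cdf (normal_distribution 0 (c^2)) x = std_normal_cdf (x / c)"
proof -
  interpret S: prob_space std_normal_distribution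
    using real_dist_normal_dist by (simp add: real_distribution_def)
  have sets: "sets std_normal_distribution = sets lborel" by simp
  have "distributed std_normal_distribution lborel (\<lambda>x. x) (normal_density 0 1)"
    unfolding distributed_def using distr_id2[OF sets[symmetric]] by simp
  from S.normal_density_affine[OF this, of c 0] c
  have "distributed std_normal_distribution lborel (\<lambda>x. c * x) (normal_density 0 c)" by simp
  then have N: "normal_distribution 0 (c^2) = distr std_normal_distribution lborel (\<lambda>x. c * x)"
    unfolding normal_distribution_def using c by (simp add: distributed_def)
  have "cdf (normal_distribution 0 (c^2)) x
      = measure std_normal_distribution ((\<lambda>y. c * y) -` {..x} \<inter> space std_normal_distribution)"
    unfolding N cdf_def2 by (subst measure_distr) auto
  also have "(\<lambda>y. c * y) -` {..x} \<inter> space std_normal_distribution = {..x/c}"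
    using c by (auto simp: field_simps)
  finally show ?thesis by (simp add: cdf_def2)
qed

lemma cdf_distr_eq_measure:
  assumes "f \<in> borel_measurable M"
  shows "cdf (distr M borel f) x = measure M {\<omega>\<in>space M. f \<omega> \<le> x}"
  unfolding cdf_def2 using assms by (subst measure_distr) (auto intro!: arg_cong[where f="measure M"])

context prob_space
begin

lemma weak_conv_std_normalD:
  assumes "\<And>n. Y n \<in> borel_measurable M"
    and "weak_conv_m (\<lambda>n. distr M borel (Y n)) std_normal_distribution"
  shows "(\<lambda>n. prob {\<omega>\<in>space M. Y n \<omega> \<le> y}) \<longlonglongrightarrow> std_normal_cdf y"
  using assms(2) isCont_std_normal_cdf[of y]
  unfolding weak_conv_m_def weak_conv_def cdf_distr_eq_measure[OF assms(1)] by auto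

lemma prob_le_sandwich:
  fixes X Z :: "'a \<Rightarrow> real" and \<epsilon> x :: real
  assumes [measurable]: "X \<in> borel_measurable M" "Z \<in> borel_measurable M"
  defines "R \<equiv> {\<omega>\<in>space M. \<epsilon> < \<bar>X \<omega> - Z \<omega>\<bar>}"
  shows "prob {\<omega>\<in>space M. X \<omega> \<le> x} \<le> prob {\<omega>\<in>space M. Z \<omega> \<le> x + \<epsilon>} + prob R"
    and "prob {\<omega>\<in>space M. Z \<omega> \<le> x - \<epsilon>} \<le> prob {\<omega>\<in>space M. X \<omega> \<le> x} + prob R"
proof -
  have [measurable]: "R \<in> sets M" unfolding R_def by measurable
  have "{\<omega>\<in>space M. X \<omega> \<le> x} \<subseteq> {\<omega>\<in>space M. Z \<omega> \<le> x + \<epsilon>} \<union> R"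
    "{\<omega>\<in>space M. Z \<omega> \<le> x - \<epsilon>} \<subseteq> {\<omega>\<in>space M. X \<omega> \<le> x} \<union> R"
    unfolding R_def by auto
  then show "prob {\<omega>\<in>space M. X \<omega> \<le> x} \<le> prob {\<omega>\<in>space M. Z \<omega> \<le> x + \<epsilon>} + prob R"
    and "prob {\<omega>\<in>space M. Z \<omega> \<le> x - \<epsilon>} \<le> prob {\<omega>\<in>space M. X \<omega> \<le> x} + prob R"
    by (auto intro: order.trans[OF finite_measure_mono measure_Un_le])
qed

lemma slutsky_std_normal:
  fixes X Y :: "nat \<Rightarrow> 'a \<Rightarrow> real"
  assumes Xm: "\<And>n. X n \<in> borel_measurable M" and Ym: "\<And>n. Y n \<in> borel_measurable M"
    and Y: "weak_conv_m (\<lambda>n. distr M borel (Y n)) std_normal_distribution"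
    and c: "c > 0"
    and close: "\<And>\<epsilon>. \<epsilon> > 0 \<Longrightarrow> (\<lambda>n. prob {\<omega>\<in>space M. \<epsilon> < \<bar>X n \<omega> - c * Y n \<omega>\<bar>}) \<longlonglongrightarrow> 0"
  shows "weak_conv_m (\<lambda>n. distr M borel (X n)) (normal_distribution 0 (c^2))"
  unfolding weak_conv_m_def weak_conv_def cdf_distr_eq_measure[OF Xm] cdf_normal_distribution_zero[OF c]
proof (intro allI impI tendstoI)
  fix x \<eta> :: real assume \<eta>: "\<eta> > 0"
  obtain d where d: "d > 0"
    "\<And>y. y \<noteq> x/c \<Longrightarrow> \<bar>y - x/c\<bar> < d \<Longrightarrow> \<bar>std_normal_cdf y - std_normal_cdf (x/c)\<bar> < \<eta>/3"
    using isCont_std_normal_cdf[of "x/c", unfolded isCont_def LIM_eq] \<eta>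
    by (metis divide_pos_pos real_norm_def zero_less_numeral)
  define \<epsilon> where "\<epsilon> = c * d / 2"
  have \<epsilon>0: "\<epsilon> > 0" using c d by (simp add: \<epsilon>_def)
  have xp: "(x + \<epsilon>) / c = x/c + d/2" "(x - \<epsilon>) / c = x/c - d/2"
    using c by (simp_all add: \<epsilon>_def field_simps)
  have cdf_near: "\<bar>std_normal_cdf ((x + \<epsilon>) / c) - std_normal_cdf (x/c)\<bar> < \<eta>/3"
      "\<bar>std_normal_cdf ((x - \<epsilon>) / c) - std_normal_cdf (x/c)\<bar> < \<eta>/3"
    unfolding xp by (rule d(2); use d in simp)+
  have scale: "{\<omega>\<in>space M. c * Y n \<omega> \<le> z} = {\<omega>\<in>space M. Y n \<omega> \<le> z / c}" for n z
    using c by (auto simp: pos_le_divide_eq mult.commute)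
  have "eventually (\<lambda>n. dist (prob {\<omega>\<in>space M. Y n \<omega> \<le> (x + \<epsilon>) / c}) (std_normal_cdf ((x + \<epsilon>) / c)) < \<eta>/3
      \<and> dist (prob {\<omega>\<in>space M. Y n \<omega> \<le> (x - \<epsilon>) / c}) (std_normal_cdf ((x - \<epsilon>) / c)) < \<eta>/3
      \<and> dist (prob {\<omega>\<in>space M. \<epsilon> < \<bar>X n \<omega> - c * Y n \<omega>\<bar>}) 0 < \<eta>/3) sequentially"
    using \<eta> by (intro eventually_conj tendstoD[OF weak_conv_std_normalD[OF Ym Y]] tendstoD[OF close[OF \<epsilon>0]]) auto
  then show "eventually (\<lambda>n. dist (prob {\<omega>\<in>space M. X n \<omega> \<le> x}) (std_normal_cdf (x/c)) < \<eta>) sequentially"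
  proof (rule eventually_mono)
    fix n assume H: "dist (prob {\<omega>\<in>space M. Y n \<omega> \<le> (x + \<epsilon>) / c}) (std_normal_cdf ((x + \<epsilon>) / c)) < \<eta>/3
      \<and> dist (prob {\<omega>\<in>space M. Y n \<omega> \<le> (x - \<epsilon>) / c}) (std_normal_cdf ((x - \<epsilon>) / c)) < \<eta>/3
      \<and> dist (prob {\<omega>\<in>space M. \<epsilon> < \<bar>X n \<omega> - c * Y n \<omega>\<bar>}) 0 < \<eta>/3"
    have "(\<lambda>\<omega>. c * Y n \<omega>) \<in> borel_measurable M" using Ym[of n] by measurable
    note prob_le_sandwich[OF Xm[of n] this, where x=x and \<epsilon>=\<epsilon>, unfolded scale]
    moreover have "prob {\<omega>\<in>space M. \<epsilon> < \<bar>X n \<omega> - c * Y n \<omega>\<bar>} \<ge> 0" by simp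
    ultimately show "dist (prob {\<omega>\<in>space M. X n \<omega> \<le> x}) (std_normal_cdf (x/c)) < \<eta>"
      using H cdf_near unfolding dist_real_def by linarith
  qed
qed

lemma weak_conv_std_normal_tight:
  fixes Y :: "nat \<Rightarrow> 'a \<Rightarrow> real"
  assumes Ym: "\<And>n. Y n \<in> borel_measurable M"
    and Y: "weak_conv_m (\<lambda>n. distr M borel (Y n)) std_normal_distribution"
    and L: "filterlim L at_top sequentially"
  shows "(\<lambda>n. prob {\<omega>\<in>space M. L n < \<bar>Y n \<omega>\<bar>}) \<longlonglongrightarrow> 0"
proof (rule tendstoI)
  interpret S: real_distribution std_normal_distribution by (rule real_dist_normal_dist)
  fix \<eta> :: real assume \<eta>: "\<eta> > 0"
  have "eventually (\<lambda>y. dist (std_normal_cdf y) 0 < \<eta>/4) at_bot"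
    using S.cdf_lim_at_bot \<eta> by (intro tendstoD) auto
  then obtain A1 where A1: "\<And>y. y \<le> A1 \<Longrightarrow> std_normal_cdf y < \<eta>/4"
    unfolding eventually_at_bot_linorder dist_real_def using S.cdf_nonneg by fastforce
  have "eventually (\<lambda>y. dist (std_normal_cdf y) 1 < \<eta>/4) at_top"
    using S.cdf_lim_at_top_prob \<eta> by (intro tendstoD) auto
  then obtain A2 where A2: "\<And>y. y \<ge> A2 \<Longrightarrow> 1 - std_normal_cdf y < \<eta>/4"
    unfolding eventually_at_top_linorder dist_real_def by (metis abs_minus_commute abs_less_iff)
  define A where "A = max (- A1) A2"
  have tails: "std_normal_cdf (- A) < \<eta>/4" "1 - std_normal_cdf A < \<eta>/4"
    using A1[of "-A"] A2[of A] by (auto simp: A_def)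
  have "eventually (\<lambda>n. A \<le> L n
      \<and> dist (prob {\<omega>\<in>space M. Y n \<omega> \<le> - A}) (std_normal_cdf (- A)) < \<eta>/4
      \<and> dist (prob {\<omega>\<in>space M. Y n \<omega> \<le> A}) (std_normal_cdf A) < \<eta>/4) sequentially"
    using \<eta> by (intro eventually_conj tendstoD[OF weak_conv_std_normalD[OF Ym Y]])
      (auto simp: filterlim_at_top[THEN iffD1, OF L])
  then show "eventually (\<lambda>n. dist (prob {\<omega>\<in>space M. L n < \<bar>Y n \<omega>\<bar>}) 0 < \<eta>) sequentially"
  proof (rule eventually_mono)
    fix n assume H: "A \<le> L n
      \<and> dist (prob {\<omega>\<in>space M. Y n \<omega> \<le> - A}) (std_normal_cdf (- A)) < \<eta>/4
      \<and> dist (prob {\<omega>\<in>space M. Y n \<omega> \<le> A}) (std_normal_cdf A) < \<eta>/4"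
    define R where "R = {\<omega>\<in>space M. L n < \<bar>Y n \<omega>\<bar>}"
    define B1 where "B1 = {\<omega>\<in>space M. Y n \<omega> \<le> - A}"
    define B2 where "B2 = {\<omega>\<in>space M. Y n \<omega> \<le> A}"
    have meas: "R \<in> sets M" "B1 \<in> sets M" "B2 \<in> sets M"
      unfolding R_def B1_def B2_def using Ym[of n] by measurable
    have "R \<subseteq> B1 \<union> (space M - B2)" unfolding R_def B1_def B2_def using H by auto
    then have "prob R \<le> prob B1 + prob (space M - B2)"
      using finite_measure_mono measure_Un_le[of B1 M "space M - B2"] meas
      by (meson order.trans sets.Diff sets.Un sets.top)
    also have "prob (space M - B2) = 1 - prob B2" by (rule prob_compl[OF meas(3)])
    finally have "prob R \<le> prob B1 + (1 - prob B2)" .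
    moreover have "prob R \<ge> 0" by simp
    ultimately show "dist (prob R) 0 < \<eta>"
      using H tails unfolding B1_def[symmetric] B2_def[symmetric] dist_real_def by linarith
  qed
qed

end

section \<open>The delta method for Bernoulli frequencies\<close>

lemma remainder_le_on_window:
  fixes n :: nat and t \<theta> \<sigma> L \<delta> D K F e :: real
  assumes n: "n > 0"
    and z: "\<bar>sqrt (real n) * (t - \<theta>)\<bar> \<le> \<sigma> * L" and window: "\<sigma> * (L / sqrt (real n)) < \<delta>"
    and bound: "\<bar>t - \<theta>\<bar> \<le> \<delta> \<Longrightarrow> \<bar>F + sqrt (real n) * D * (t - \<theta>)\<bar> \<le> K * sqrt (real n) * (t - \<theta>)^2 + e"
  shows "\<bar>F + sqrt (real n) * D * (t - \<theta>)\<bar> \<le> \<bar>K\<bar> * \<sigma>^2 * (L^2 / sqrt (real n)) + e"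
proof -
  define z where "z = sqrt (real n) * (t - \<theta>)"
  have sn: "sqrt (real n) > 0" using n by simp
  have tz: "t - \<theta> = z / sqrt (real n)" unfolding z_def using sn by simp
  have "\<bar>t - \<theta>\<bar> = \<bar>sqrt (real n) * (t - \<theta>)\<bar> / sqrt (real n)"
    using sn by (simp add: abs_mult)
  also have "\<dots> \<le> \<sigma> * L / sqrt (real n)" using z sn by (simp add: divide_right_mono)
  finally have "\<bar>t - \<theta>\<bar> \<le> \<sigma> * (L / sqrt (real n))" by simp
  then have "\<bar>F + sqrt (real n) * D * (t - \<theta>)\<bar> \<le> K * sqrt (real n) * (t - \<theta>)^2 + e"
    using window by (intro bound) linarith
  also have "K * sqrt (real n) * (t - \<theta>)^2 = K * z^2 / sqrt (real n)"
    unfolding tz using sn by (simp add: field_simps power2_eq_square)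
  also have "\<dots> \<le> \<bar>K\<bar> * (\<sigma> * L)^2 / sqrt (real n)"
  proof -
    have "z^2 \<le> (\<sigma> * L)^2" using z unfolding z_def[symmetric]
      by (metis abs_ge_zero power2_abs power_mono)
    then have "K * z^2 \<le> \<bar>K\<bar> * (\<sigma> * L)^2"
      by (meson abs_ge_self abs_ge_zero mult_mono order_trans zero_le_power2)
    then show ?thesis using sn by (simp add: divide_right_mono)
  qed
  finally show ?thesis by (simp add: power_mult_distrib)
qed

lemma sum_zero_one_eq_of_nat:
  assumes "\<forall>i. B i = 0 \<or> B i = (1::real)"
  shows "\<exists>k\<le>n. (\<Sum>i<n. B i) = real k"
proof (induction n)
  case 0 then show ?case by simp
next
  case (Suc n)
  then obtain k where k: "k \<le> n" "(\<Sum>i<n. B i) = real k" by blast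
  show ?case
  proof (cases "B n = 0")
    case True then show ?thesis using k by (intro exI[of _ k]) auto
  next
    case False then have "B n = 1" using assms by auto
    then show ?thesis using k by (intro exI[of _ "Suc k"]) auto
  qed
qed

locale bernoulli_sequence = prob_space M for M :: "'a measure" +
  fixes B :: "nat \<Rightarrow> 'a \<Rightarrow> real" and \<theta> :: real
  assumes \<theta>_pos: "0 < \<theta>" and \<theta>_less_1: "\<theta> < 1"
    and B_measurable: "\<And>i. B i \<in> borel_measurable M"
    and B_indep: "indep_vars (\<lambda>_. borel) B UNIV"
    and B_zero_one: "\<And>i. AE \<omega> in M. B i \<omega> = 0 \<or> B i \<omega> = 1"
    and prob_B_eq_1: "\<And>i. prob {\<omega> \<in> space M. B i \<omega> = 1} = \<theta>"
begin

lemma B_moments: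
  shows "expectation (B i) = \<theta>" "integrable M (\<lambda>\<omega>. (B i \<omega>)^2)"
    "expectation (\<lambda>\<omega>. (B i \<omega> - \<theta>)^2) = \<theta> * (1 - \<theta>)"
proof -
  define A where "A = {\<omega>\<in>space M. B i \<omega> = 1}"
  have Am: "A \<in> sets M" unfolding A_def using B_measurable[of i] by measurable
  define I where "I = (indicator A :: 'a \<Rightarrow> real)"
  have Im: "I \<in> borel_measurable M" unfolding I_def using Am by simp
  have intI: "integrable M I" unfolding I_def using Am
    by (intro integrable_real_indicator) (auto simp: emeasure_eq_measure)
  have eI: "expectation I = \<theta>" unfolding I_def using Am prob_B_eq_1[of i] by (simp add: A_def)
  have "AE \<omega> in M. B i \<omega> = I \<omega> \<and> (B i \<omega>)^2 = I \<omega> \<and> (B i \<omega> - \<theta>)^2 = \<theta>^2 + (1 - 2*\<theta>) * I \<omega>"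
    using B_zero_one[of i] AE_space
    by eventually_elim (auto simp: I_def A_def indicator_def power2_eq_square algebra_simps)
  then have AE: "AE \<omega> in M. B i \<omega> = I \<omega>" "AE \<omega> in M. (B i \<omega>)^2 = I \<omega>"
      "AE \<omega> in M. (B i \<omega> - \<theta>)^2 = \<theta>^2 + (1 - 2*\<theta>) * I \<omega>"
    by (auto elim: eventually_mono)
  show "expectation (B i) = \<theta>" using integral_cong_AE[OF B_measurable Im AE(1)] eI by simp
  show "integrable M (\<lambda>\<omega>. (B i \<omega>)^2)"
    using integrable_cong_AE[of "\<lambda>\<omega>. (B i \<omega>)^2" M I] AE(2) Im B_measurable[of i] intI by auto
  have "expectation (\<lambda>\<omega>. (B i \<omega> - \<theta>)^2) = expectation (\<lambda>\<omega>. \<theta>^2 + (1 - 2*\<theta>) * I \<omega>)"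
    by (rule integral_cong_AE) (use AE(3) B_measurable[of i] Im in auto)
  also have "\<dots> = \<theta>^2 + (1 - 2*\<theta>) * \<theta>"
    using intI eI by (simp add: prob_space)
  finally show "expectation (\<lambda>\<omega>. (B i \<omega> - \<theta>)^2) = \<theta> * (1 - \<theta>)"
    by (simp add: power2_eq_square algebra_simps)
qed

lemma cdf_B: "cdf (distr M borel (B i)) x = (if x < 0 then 0 else if x < 1 then 1 - \<theta> else 1)"
proof -
  define A where "A = {\<omega>\<in>space M. B i \<omega> = 1}"
  have [measurable]: "B i \<in> borel_measurable M" by (rule B_measurable)
  have Am: "A \<in> sets M" unfolding A_def by measurable
  have Sm: "{\<omega>\<in>space M. B i \<omega> \<le> x} \<in> sets M" by measurable
  note zero_one = B_zero_one[of i]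
  consider "x < 0" | "0 \<le> x" "x < 1" | "1 \<le> x" by linarith
  then have "prob {\<omega>\<in>space M. B i \<omega> \<le> x} = (if x < 0 then 0 else if x < 1 then 1 - \<theta> else 1)"
  proof cases
    case 1
    have "prob {\<omega>\<in>space M. B i \<omega> \<le> x} = prob {}"
      by (rule measure_eq_AE) (use zero_one 1 Sm in \<open>auto elim!: eventually_mono\<close>)
    then show ?thesis using 1 by simp
  next
    case 2
    have "prob {\<omega>\<in>space M. B i \<omega> \<le> x} = prob (space M - A)"
      by (rule measure_eq_AE) (use zero_one 2 Sm Am in \<open>auto elim!: eventually_mono simp: A_def\<close>)
    also have "\<dots> = 1 - \<theta>" using prob_compl[OF Am] prob_B_eq_1[of i] by (simp add: A_def)
    finally show ?thesis using 2 by simp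
  next
    case 3
    have "prob {\<omega>\<in>space M. B i \<omega> \<le> x} = prob (space M)"
      by (rule measure_eq_AE) (use zero_one 3 Sm in \<open>auto elim!: eventually_mono\<close>)
    then show ?thesis using 3 by (simp add: prob_space)
  qed
  then show ?thesis by (simp add: cdf_distr_eq_measure[OF B_measurable])
qed

lemma distr_B_eq: "distr M borel (B i) = distr M borel (B 0)"
  by (rule cdf_unique) (use B_measurable cdf_B in \<open>auto simp: fun_eq_iff\<close>)

definition standardized_sum :: "real \<Rightarrow> nat \<Rightarrow> 'a \<Rightarrow> real" where
  "standardized_sum s n \<omega> = (\<Sum>i<n. s * B i \<omega> - s * \<theta>) / sqrt (real n * (\<theta> * (1 - \<theta>)))"

lemma clt_signed:
  assumes s: "s = 1 \<or> s = -1"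
  shows "weak_conv_m (\<lambda>n. distr M borel (standardized_sum s n)) std_normal_distribution"
proof -
  define \<sigma> where "\<sigma> = sqrt (\<theta> * (1 - \<theta>))"
  have \<sigma>: "\<sigma> > 0" "\<sigma>\<^sup>2 = \<theta> * (1 - \<theta>)" using \<theta>_pos \<theta>_less_1 by (simp_all add: \<sigma>_def)
  have s2: "s * s = 1" using s by auto
  have "weak_conv_m (\<lambda>n. distr M borel (\<lambda>\<omega>. (\<Sum>i<n. s * B i \<omega> - s * \<theta>) / sqrt (real n * \<sigma>\<^sup>2)))
      std_normal_distribution"
  proof (rule central_limit_theorem[where \<mu>="distr M borel (\<lambda>\<omega>. s * B 0 \<omega>)"])
    show "indep_vars (\<lambda>i. borel) (\<lambda>i \<omega>. s * B i \<omega>) UNIV"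
      using B_indep by (rule indep_vars_compose2[where Y="\<lambda>i x. s * x"]) auto
    show "expectation (\<lambda>\<omega>. s * B n \<omega>) = s * \<theta>" for n using B_moments(1) by simp
    show "integrable M (\<lambda>\<omega>. (s * B n \<omega>)\<^sup>2)" for n
      using B_moments(2) s2 by (simp add: power_mult_distrib power2_eq_square[of s])
    have "(s * b - s * \<theta>)^2 = (b - \<theta>)^2" for b
      using s2 by (simp add: power2_eq_square algebra_simps)
    then show "variance (\<lambda>\<omega>. s * B n \<omega>) = \<sigma>\<^sup>2" for n
      using B_moments(1,3) \<sigma> by simp
    show "distr M borel (\<lambda>\<omega>. s * B n \<omega>) = distr M borel (\<lambda>\<omega>. s * B 0 \<omega>)" for n
    proof -
      have "distr M borel (\<lambda>\<omega>. s * B i \<omega>) = distr (distr M borel (B i)) borel (\<lambda>x. s * x)" for i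
        using B_measurable[of i] by (subst distr_distr) (auto simp: o_def)
      then show ?thesis using distr_B_eq[of n] by simp
    qed
  qed (use \<sigma> in simp)
  then show ?thesis using \<sigma> by (simp add: standardized_sum_def[abs_def])
qed

lemma standardized_sum_scale:
  assumes n: "n > 0" and s: "s = 1 \<or> s = -1"
  shows "sqrt (real n) * ((\<Sum>i<n. B i \<omega>) / real n - \<theta>) = s * sqrt (\<theta> * (1 - \<theta>)) * standardized_sum s n \<omega>"
proof -
  define \<sigma> where "\<sigma> = sqrt (\<theta> * (1 - \<theta>))"
  have \<sigma>: "\<sigma> > 0" using \<theta>_pos \<theta>_less_1 by (simp add: \<sigma>_def)
  have n0: "real n > 0" "sqrt (real n) > 0" using n by auto
  have sum_eq: "(\<Sum>i<n. s * B i \<omega> - s * \<theta>) = s * ((\<Sum>i<n. B i \<omega>) - real n * \<theta>)"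
    by (simp add: sum_subtractf sum_distrib_left algebra_simps)
  have sqrt_eq: "sqrt (real n * (\<theta> * (1 - \<theta>))) = sqrt (real n) * \<sigma>"
    by (simp add: \<sigma>_def real_sqrt_mult)
  have "s * \<sigma> * standardized_sum s n \<omega> = (s * s) * ((\<Sum>i<n. B i \<omega>) - real n * \<theta>) / sqrt (real n)"
    unfolding standardized_sum_def sum_eq sqrt_eq using \<sigma> n0 by (simp add: field_simps)
  also have "\<dots> = ((\<Sum>i<n. B i \<omega>) - real n * \<theta>) / sqrt (real n)" using s by auto
  also have "\<dots> = sqrt (real n) * ((\<Sum>i<n. B i \<omega>) / real n - \<theta>)"
    using n0 by (simp add: field_simps)
  finally show ?thesis by (simp add: \<sigma>_def)
qed

lemma AE_sum_B_eq_of_nat: "AE \<omega> in M. \<forall>n. \<exists>k\<le>n. (\<Sum>i<n. B i \<omega>) = real k"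
proof -
  have "AE \<omega> in M. \<forall>i. B i \<omega> = 0 \<or> B i \<omega> = 1"
    using B_zero_one by (simp add: AE_all_countable)
  then show ?thesis by eventually_elim (blast intro: sum_zero_one_eq_of_nat)
qed

lemma AE_linearization_error_le:
  fixes F :: "real \<Rightarrow> real" and D \<delta> K L e s :: real and n :: nat
  defines "\<sigma> \<equiv> sqrt (\<theta> * (1 - \<theta>))"
  assumes n: "n > 0" and s: "s = 1 \<or> s = -1" "D * s = - \<bar>D\<bar>"
    and window: "\<sigma> * (L / sqrt (real n)) < \<delta>"
    and bound: "\<forall>k\<le>n. \<bar>real k / real n - \<theta>\<bar> \<le> \<delta> \<longrightarrow>
      \<bar>F (real k / real n) + sqrt (real n) * D * (real k / real n - \<theta>)\<bar>
        \<le> K * sqrt (real n) * (real k / real n - \<theta>)^2 + e"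
  shows "AE \<omega> in M. \<bar>standardized_sum s n \<omega>\<bar> \<le> L \<longrightarrow>
    \<bar>F ((\<Sum>i<n. B i \<omega>) / real n) - \<bar>D\<bar> * \<sigma> * standardized_sum s n \<omega>\<bar> \<le> \<bar>K\<bar> * \<sigma>^2 * (L^2 / sqrt (real n)) + e"
  using AE_sum_B_eq_of_nat
proof eventually_elim
  case (elim \<omega>)
  then obtain k where k: "k \<le> n" "(\<Sum>i<n. B i \<omega>) = real k" by blast
  have \<sigma>: "\<sigma> > 0" using \<theta>_pos \<theta>_less_1 by (simp add: \<sigma>_def)
  have scale: "sqrt (real n) * (real k / real n - \<theta>) = s * \<sigma> * standardized_sum s n \<omega>"
    using standardized_sum_scale[OF n s(1), of \<omega>] unfolding k(2) \<sigma>_def .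
  have "sqrt (real n) * D * (real k / real n - \<theta>) = D * (sqrt (real n) * (real k / real n - \<theta>))"
    by (simp only: ac_simps)
  also have "\<dots> = (D * s) * \<sigma> * standardized_sum s n \<omega>"
    unfolding scale by (simp only: ac_simps)
  finally have lin: "sqrt (real n) * D * (real k / real n - \<theta>) = - (\<bar>D\<bar> * \<sigma> * standardized_sum s n \<omega>)"
    unfolding s(2) by simp
  show ?case
  proof
    assume "\<bar>standardized_sum s n \<omega>\<bar> \<le> L"
    moreover have "\<bar>s * \<sigma> * standardized_sum s n \<omega>\<bar> = \<sigma> * \<bar>standardized_sum s n \<omega>\<bar>"
      using s(1) \<sigma> by (auto simp: abs_mult)
    ultimately have "\<bar>sqrt (real n) * (real k / real n - \<theta>)\<bar> \<le> \<sigma> * L"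
      unfolding scale using \<sigma> by (simp add: mult_left_mono)
    then have "\<bar>F (real k / real n) + sqrt (real n) * D * (real k / real n - \<theta>)\<bar>
        \<le> \<bar>K\<bar> * \<sigma>^2 * (L^2 / sqrt (real n)) + e"
      using n window bound k(1) by (intro remainder_le_on_window) auto
    then show "\<bar>F ((\<Sum>i<n. B i \<omega>) / real n) - \<bar>D\<bar> * \<sigma> * standardized_sum s n \<omega>\<bar>
        \<le> \<bar>K\<bar> * \<sigma>^2 * (L^2 / sqrt (real n)) + e"
      unfolding k(2) lin by simp
  qed
qed

lemma standardized_sum_measurable: "standardized_sum s n \<in> borel_measurable M"
  unfolding standardized_sum_def using B_measurable by measurable

lemma linearization_error_tendsto_zero:
  fixes F :: "nat \<Rightarrow> real \<Rightarrow> real" and D \<delta> K \<epsilon> s :: real and e :: "nat \<Rightarrow> real"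
  defines "\<sigma> \<equiv> sqrt (\<theta> * (1 - \<theta>))"
  assumes s: "s = 1 \<or> s = -1" "D * s = - \<bar>D\<bar>" and \<delta>: "\<delta> > 0" and e: "e \<longlonglongrightarrow> 0" and \<epsilon>: "\<epsilon> > 0"
    and window: "eventually (\<lambda>n. \<forall>k\<le>n. \<bar>real k / real n - \<theta>\<bar> \<le> \<delta> \<longrightarrow>
        \<bar>F n (real k / real n) + sqrt (real n) * D * (real k / real n - \<theta>)\<bar>
          \<le> K * sqrt (real n) * (real k / real n - \<theta>)^2 + e n) sequentially"
  shows "(\<lambda>n. prob {\<omega>\<in>space M. \<epsilon> < \<bar>F n ((\<Sum>i<n. B i \<omega>) / real n) - \<bar>D\<bar> * \<sigma> * standardized_sum s n \<omega>\<bar>})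
    \<longlonglongrightarrow> 0"
proof -
  define L where "L n = real n powr (1/8)" for n :: nat
  have "(\<lambda>n. \<sigma> * (L n / sqrt (real n))) \<longlonglongrightarrow> 0"
    unfolding L_def by (intro tendsto_mult_right_zero) real_asymp
  then have "eventually (\<lambda>n. \<sigma> * (L n / sqrt (real n)) < \<delta>) sequentially"
    using \<delta> by (rule order_tendstoD(2))
  moreover have "(\<lambda>n. \<bar>K\<bar> * \<sigma>^2 * ((L n)^2 / sqrt (real n)) + e n) \<longlonglongrightarrow> 0"
    unfolding L_def by (intro tendsto_add_zero[OF _ e] tendsto_mult_right_zero) real_asymp
  then have "eventually (\<lambda>n. \<bar>K\<bar> * \<sigma>^2 * ((L n)^2 / sqrt (real n)) + e n < \<epsilon>) sequentially"
    using \<epsilon> by (rule order_tendstoD(2))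
  ultimately have le: "eventually (\<lambda>n.
      prob {\<omega>\<in>space M. \<epsilon> < \<bar>F n ((\<Sum>i<n. B i \<omega>) / real n) - \<bar>D\<bar> * \<sigma> * standardized_sum s n \<omega>\<bar>}
      \<le> prob {\<omega>\<in>space M. L n < \<bar>standardized_sum s n \<omega>\<bar>}) sequentially"
    using window eventually_gt_at_top[of 0]
  proof eventually_elim
    case (elim n)
    note H = elim
    from AE_linearization_error_le[OF H(4) s H(1)[unfolded \<sigma>_def] H(3)]
    have "AE \<omega> in M. \<epsilon> < \<bar>F n ((\<Sum>i<n. B i \<omega>) / real n) - \<bar>D\<bar> * \<sigma> * standardized_sum s n \<omega>\<bar>
        \<longrightarrow> L n < \<bar>standardized_sum s n \<omega>\<bar>"
    proof eventually_elim
      case (elim \<omega>)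
      show ?case
      proof (rule impI, rule ccontr)
        assume "\<epsilon> < \<bar>F n ((\<Sum>i<n. B i \<omega>) / real n) - \<bar>D\<bar> * \<sigma> * standardized_sum s n \<omega>\<bar>"
          "\<not> L n < \<bar>standardized_sum s n \<omega>\<bar>"
        with elim H(2) show False by (simp add: not_less \<sigma>_def)
      qed
    qed
    then have "AE \<omega> in M.
        \<omega> \<in> {\<omega>\<in>space M. \<epsilon> < \<bar>F n ((\<Sum>i<n. B i \<omega>) / real n) - \<bar>D\<bar> * \<sigma> * standardized_sum s n \<omega>\<bar>}
        \<longrightarrow> \<omega> \<in> {\<omega>\<in>space M. L n < \<bar>standardized_sum s n \<omega>\<bar>}"
      by (rule eventually_mono) auto
    then show ?case
      by (rule finite_measure_mono_AE) (use standardized_sum_measurable[of s n] in measurable)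
  qed
  have tight: "(\<lambda>n. prob {\<omega>\<in>space M. L n < \<bar>standardized_sum s n \<omega>\<bar>}) \<longlonglongrightarrow> 0"
    by (rule weak_conv_std_normal_tight[OF standardized_sum_measurable clt_signed[OF s(1)]])
      (unfold L_def, real_asymp)
  show ?thesis by (rule tendsto_sandwich[OF _ le tendsto_const tight]) auto
qed

text \<open>The sign \<open>s\<close> of the summands is chosen with \<open>D s = -\<bar>D\<bar>\<close>, so that the linear term
  \<open>sqrt n D (t - \<theta>)\<close> becomes \<open>-\<bar>D\<bar> \<sigma> Y\<close> with a positive factor, as Slutsky's lemma requires.\<close>

lemma delta_method:
  fixes F :: "nat \<Rightarrow> real \<Rightarrow> real" and D \<delta> K :: real and e :: "nat \<Rightarrow> real"
  assumes D: "D \<noteq> 0" and Fm: "\<And>n. F n \<in> borel_measurable borel"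
    and \<delta>: "\<delta> > 0" and e: "e \<longlonglongrightarrow> 0"
    and window: "eventually (\<lambda>n. \<forall>k\<le>n. \<bar>real k / real n - \<theta>\<bar> \<le> \<delta> \<longrightarrow>
        \<bar>F n (real k / real n) + sqrt (real n) * D * (real k / real n - \<theta>)\<bar>
          \<le> K * sqrt (real n) * (real k / real n - \<theta>)^2 + e n) sequentially"
  shows "weak_conv_m (\<lambda>n. distr M borel (\<lambda>\<omega>. F n ((\<Sum>i<n. B i \<omega>) / real n)))
           (normal_distribution 0 (D^2 * (\<theta> * (1 - \<theta>))))"
proof -
  define s :: real where "s = (if D > 0 then -1 else 1)"
  have s: "s = 1 \<or> s = -1" "D * s = - \<bar>D\<bar>" by (auto simp: s_def)
  define c where "c = \<bar>D\<bar> * sqrt (\<theta> * (1 - \<theta>))"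
  have c: "c > 0" "c^2 = D^2 * (\<theta> * (1 - \<theta>))"
    using D \<theta>_pos \<theta>_less_1 by (simp_all add: c_def power_mult_distrib)
  have Xm: "(\<lambda>\<omega>. F n ((\<Sum>i<n. B i \<omega>) / real n)) \<in> borel_measurable M" for n
    by (rule measurable_compose[OF _ Fm]) (use B_measurable in measurable)
  have close: "(\<lambda>n. prob {\<omega>\<in>space M. \<epsilon> < \<bar>F n ((\<Sum>i<n. B i \<omega>) / real n) - c * standardized_sum s n \<omega>\<bar>})
      \<longlonglongrightarrow> 0" if "\<epsilon> > 0" for \<epsilon>
    unfolding c_def using linearization_error_tendsto_zero[OF s \<delta> e that window] .
  have "weak_conv_m (\<lambda>n. distr M borel (\<lambda>\<omega>. F n ((\<Sum>i<n. B i \<omega>) / real n))) (normal_distribution 0 (c^2))"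
    by (rule slutsky_std_normal[OF Xm standardized_sum_measurable clt_signed[OF s(1)] c(1) close])
  then show ?thesis unfolding c(2) .
qed

end

section \<open>The two statistics near \<open>\<theta>\<close>\<close>

definition PBR_statistic :: "real \<Rightarrow> real \<Rightarrow> nat \<Rightarrow> real \<Rightarrow> real" where
  "PBR_statistic \<phi> \<theta> n t = - sqrt (real n) *
     ln (sqrt (2 * pi * \<theta> * (1 - \<theta>)) * P_PBR n t \<phi> / (sqrt (real n) * P_CH n t \<phi>))"

definition X_statistic :: "real \<Rightarrow> real \<Rightarrow> nat \<Rightarrow> real \<Rightarrow> real" where
  "X_statistic \<phi> \<theta> n t = - sqrt (real n) *
     ln ((\<theta> - \<phi>) / (1 - \<phi>) * sqrt (2 * pi * (1 - \<theta>) / \<theta>) * (sqrt (real n) * P_X n t \<phi>) / P_CH n t \<phi>)"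

lemma window_counts:
  fixes \<theta> \<delta> :: real and n k :: nat
  assumes \<theta>: "0 < \<theta>" "\<theta> < 1" and \<delta>: "\<delta> \<le> \<theta>/2" "\<delta> \<le> (1-\<theta>)/2"
    and n: "2 \<le> \<theta> * real n" "2 \<le> (1 - \<theta>) * real n"
    and k: "k \<le> n" "\<bar>real k / real n - \<theta>\<bar> \<le> \<delta>"
  shows "\<theta> * real n / 2 \<le> real k" "(1 - \<theta>) * real n / 2 \<le> real (n - k)" "1 \<le> k" "k < n"
    and "2/real n + 2/real k + 2/real (n-k) \<le> 2/real n + 4/(\<theta>*real n) + 4/((1-\<theta>)*real n)"
proof -
  have "n \<noteq> 0" using n(1) by (intro notI) simp
  then have n0: "real n > 0" by simp
  have "\<theta> - \<delta> \<le> real k / real n" "real k / real n \<le> \<theta> + \<delta>" using k(2) by (auto simp: abs_le_iff)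
  then have k1: "(\<theta> - \<delta>) * real n \<le> real k" "real k \<le> (\<theta> + \<delta>) * real n"
    using n0 by (simp_all add: field_simps)
  have "\<theta> / 2 * real n \<le> (\<theta> - \<delta>) * real n" "(1-\<theta>)/2 * real n \<le> (1 - \<theta> - \<delta>) * real n"
    using \<delta> n0 by (intro mult_right_mono; simp)+
  with k1 k(1) show kb: "\<theta> * real n / 2 \<le> real k" "(1 - \<theta>) * real n / 2 \<le> real (n - k)"
    by (simp_all add: of_nat_diff algebra_simps)
  then show "1 \<le> k" "k < n" using n by linarith+
  have pos: "0 < \<theta> * real n / 2" "0 < (1 - \<theta>) * real n / 2" using \<theta> n0 by simp_all
  have "2 / real k \<le> 2 / (\<theta> * real n / 2)"
    by (rule divide_left_mono) (use kb pos in \<open>auto intro!: mult_pos_pos\<close>)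
  moreover have "2 / real (n-k) \<le> 2 / ((1 - \<theta>) * real n / 2)"
    by (rule divide_left_mono) (use kb pos in \<open>auto intro!: mult_pos_pos\<close>)
  ultimately
  show "2/real n + 2/real k + 2/real (n-k) \<le> 2/real n + 4/(\<theta>*real n) + 4/((1-\<theta>)*real n)"
    by simp
qed

lemma abs_neg_sqrt_mult_add:
  fixes L a x :: real
  shows "\<bar>- sqrt (real n) * L + sqrt (real n) * (- a) * x\<bar> = sqrt (real n) * \<bar>L + a * x\<bar>"
proof -
  have "- sqrt (real n) * L + sqrt (real n) * (- a) * x = - (sqrt (real n) * (L + a * x))"
    by (simp add: algebra_simps)
  then show ?thesis by (simp add: abs_mult)
qed

lemma PBR_statistic_window:
  assumes \<phi>\<theta>: "0 < \<phi>" "\<phi> < \<theta>" "\<theta> < 1"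
    and \<delta>: "\<delta> \<le> \<theta>/2" "\<delta> \<le> (1-\<theta>)/2" "\<delta> \<le> \<theta> - \<phi>"
  shows "eventually (\<lambda>n. \<forall>k\<le>n. \<bar>real k / real n - \<theta>\<bar> \<le> \<delta> \<longrightarrow>
     \<bar>PBR_statistic \<phi> \<theta> n (real k / real n)
       + sqrt (real n) * (- ((1/\<theta> - 1/(1-\<theta>)) / 2)) * (real k / real n - \<theta>)\<bar>
     \<le> (1/\<theta>^2 + 1/(1-\<theta>)^2) * sqrt (real n) * (real k / real n - \<theta>)^2
       + sqrt (real n) * (1/real n + (2/real n + 4/(\<theta>*real n) + 4/((1-\<theta>)*real n)))) sequentially"
proof -
  have \<theta>: "0 < \<theta>" "0 < 1 - \<theta>" using \<phi>\<theta> by auto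
  have "eventually (\<lambda>n. 2 \<le> \<theta> * real n \<and> 2 \<le> (1 - \<theta>) * real n) sequentially"
    using \<theta> by (intro eventually_conj) real_asymp+
  then show ?thesis
  proof (rule eventually_mono, intro allI impI)
    fix n k assume n: "2 \<le> \<theta> * real n \<and> 2 \<le> (1 - \<theta>) * real n"
      and k: "k \<le> n" "\<bar>real k / real n - \<theta>\<bar> \<le> \<delta>"
    note counts = window_counts[OF \<theta>(1) \<phi>\<theta>(3) \<delta>(1,2) n[THEN conjunct1] n[THEN conjunct2] k]
    define t where "t = real k / real n"
    have "\<phi> \<le> t" "\<bar>t - \<theta>\<bar> \<le> \<theta>/2" "\<bar>t - \<theta>\<bar> \<le> (1-\<theta>)/2"
      using k(2) \<delta> unfolding t_def by linarith+
    note lin = ln_PBR_ratio_linearization[OF \<phi>\<theta> counts(3,4) t_def this]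
    have "\<bar>PBR_statistic \<phi> \<theta> n t + sqrt (real n) * (- ((1/\<theta> - 1/(1-\<theta>)) / 2)) * (t - \<theta>)\<bar>
        = sqrt (real n) * \<bar>ln (sqrt (2 * pi * \<theta> * (1 - \<theta>)) * P_PBR n t \<phi> / (sqrt (real n) * P_CH n t \<phi>))
          + (1/\<theta> - 1/(1-\<theta>)) / 2 * (t - \<theta>)\<bar>"
      unfolding PBR_statistic_def by (rule abs_neg_sqrt_mult_add)
    also have "\<dots> \<le> sqrt (real n) * ((1/\<theta>^2 + 1/(1-\<theta>)^2) * (t - \<theta>)^2
        + (1/real n + (2/real n + 4/(\<theta>*real n) + 4/((1-\<theta>)*real n))))"
      using lin counts(5) by (intro mult_left_mono) auto
    finally show "\<bar>PBR_statistic \<phi> \<theta> n t + sqrt (real n) * (- ((1/\<theta> - 1/(1-\<theta>)) / 2)) * (t - \<theta>)\<bar>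
     \<le> (1/\<theta>^2 + 1/(1-\<theta>)^2) * sqrt (real n) * (t - \<theta>)^2
       + sqrt (real n) * (1/real n + (2/real n + 4/(\<theta>*real n) + 4/((1-\<theta>)*real n)))"
      by (simp add: algebra_simps)
  qed
qed

lemma odds_ratio_bounds:
  fixes \<phi> t :: real
  assumes "0 < \<phi>" "\<phi> < t" "t < 1"
  shows "0 < (1 - t) / t * (\<phi> / (1 - \<phi>))" "(1 - t) / t * (\<phi> / (1 - \<phi>)) < 1"
proof -
  show "0 < (1 - t) / t * (\<phi> / (1 - \<phi>))" using assms by simp
  have "(1 - t) * \<phi> < t * (1 - \<phi>)" using assms by (simp add: algebra_simps)
  then show "(1 - t) / t * (\<phi> / (1 - \<phi>)) < 1" using assms by (simp add: field_simps)
qed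

text \<open>Only the first \<open>N = \<lfloor>n\<^sup>1\<^sup>/\<^sup>4\<rfloor>\<close> terms of the tail are compared with the geometric series:
  then both \<open>N/n\<close> and \<open>\<rho>\<^sup>N\<close> are \<open>o(1/sqrt n)\<close>.\<close>

lemma ln_binom_tail_window_error:
  fixes \<phi> \<theta> t\<^sub>0 :: real and n k :: nat
  defines "\<rho>\<^sub>0 \<equiv> (1 - t\<^sub>0) / t\<^sub>0 * (\<phi> / (1 - \<phi>))"
  assumes \<phi>: "0 < \<phi>" "\<phi> < t\<^sub>0" "t\<^sub>0 < 1" and \<theta>: "0 < \<theta>" "\<theta> < 1"
    and k: "1 \<le> k" "k < n" "t\<^sub>0 \<le> real k / real n"
    and counts: "\<theta> * real n / 2 \<le> real k" "(1 - \<theta>) * real n / 2 \<le> real (n - k)"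
    and large: "real n powr (1/4) \<le> (1 - \<theta>) * real n / 2"
      "4 * real n powr (1/4) / (\<theta> * (1 - \<theta>) * real n) \<le> 1"
      "\<rho>\<^sub>0 powr (real n powr (1/4)) \<le> 1/2"
  shows "\<bar>ln (\<Sum>j\<in>{k..n}. binom_term n \<phi> j) - ln (binom_term n \<phi> k)
      + ln (1 - real (n - k) / real k * (\<phi> / (1 - \<phi>)))\<bar>
    \<le> 4 * real n powr (1/4) / (\<theta> * (1 - \<theta>) * real n) / (1 - \<rho>\<^sub>0) + 2 * \<rho>\<^sub>0 powr (real n powr (1/4))"
proof -
  have n0: "real n > 0" "real k > 0" using k by auto
  have \<rho>\<^sub>0: "0 < \<rho>\<^sub>0" "\<rho>\<^sub>0 < 1" unfolding \<rho>\<^sub>0_def using odds_ratio_bounds[OF \<phi>] by auto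
  define N where "N = nat \<lfloor>real n powr (1/4)\<rfloor>"
  have "real_of_int \<lfloor>real n powr (1/4)\<rfloor> = real N" unfolding N_def by (simp add: of_nat_nat)
  then have N: "real N \<le> real n powr (1/4)" "real n powr (1/4) \<le> real (Suc N)"
    using real_of_int_floor_add_one_gt[of "real n powr (1/4)"] of_int_floor_le[of "real n powr (1/4)"]
    by auto
  have kN: "k + N \<le> n" using N(1) large(1) counts(2) k(2) by linarith
  define \<rho> where "\<rho> = real (n - k) / real k * (\<phi> / (1 - \<phi>))"
  have \<rho>: "0 \<le> \<rho>" "\<rho> \<le> \<rho>\<^sub>0"
  proof -
    show "0 \<le> \<rho>" unfolding \<rho>_def using \<phi> by simp
    have "real n * t\<^sub>0 \<le> real k" using k(3) n0 by (simp add: field_simps)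
    then have "real (n - k) * t\<^sub>0 \<le> (1 - t\<^sub>0) * real k" using k(2) by (simp add: of_nat_diff algebra_simps)
    then have "real (n - k) / real k \<le> (1 - t\<^sub>0) / t\<^sub>0" using n0 \<phi> by (simp add: divide_simps)
    then show "\<rho> \<le> \<rho>\<^sub>0" unfolding \<rho>_def \<rho>\<^sub>0_def using \<phi> by (intro mult_right_mono) auto
  qed
  define \<epsilon> where "\<epsilon> = real N * real n / (real k * real (n - k))"
  have \<epsilon>: "0 \<le> \<epsilon>" "\<epsilon> \<le> 4 * real n powr (1/4) / (\<theta> * (1 - \<theta>) * real n)"
  proof -
    show "0 \<le> \<epsilon>" unfolding \<epsilon>_def by simp
    have "\<epsilon> \<le> (real n powr (1/4) * real n) / ((\<theta> * real n / 2) * ((1 - \<theta>) * real n / 2))"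
      unfolding \<epsilon>_def using N(1) counts \<theta> n0
      by (intro frac_le mult_right_mono mult_mono) auto
    also have "\<dots> = 4 * real n powr (1/4) / (\<theta> * (1 - \<theta>) * real n)"
      using \<theta> n0 by (simp add: field_simps)
    finally show "\<epsilon> \<le> 4 * real n powr (1/4) / (\<theta> * (1 - \<theta>) * real n)" .
  qed
  have \<rho>N: "\<rho>^Suc N \<le> \<rho>\<^sub>0 powr (real n powr (1/4))"
  proof -
    have "\<rho>^Suc N \<le> \<rho>\<^sub>0^Suc N" using \<rho> by (intro power_mono) auto
    also have "\<dots> = \<rho>\<^sub>0 powr real (Suc N)" using powr_realpow[OF \<rho>\<^sub>0(1), of "Suc N"] by simp
    also have "\<dots> \<le> \<rho>\<^sub>0 powr (real n powr (1/4))" using N(2) \<rho>\<^sub>0 by (intro powr_mono') auto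
    finally show ?thesis .
  qed
  have "\<phi> < 1" "\<rho> < 1" "\<epsilon> \<le> 1" "\<rho>^Suc N \<le> 1/2" using \<phi> \<rho> \<rho>\<^sub>0 \<epsilon> \<rho>N large by linarith+
  note tail = ln_binom_tail_error[OF \<phi>(1) this(1) k(1,2) kN \<rho>_def this(2) \<epsilon>_def this(3,4)]
  have "\<epsilon> / (1 - \<rho>) \<le> 4 * real n powr (1/4) / (\<theta> * (1 - \<theta>) * real n) / (1 - \<rho>\<^sub>0)"
    using \<epsilon> \<rho> \<rho>\<^sub>0 by (intro frac_le) auto
  with tail \<rho>N show ?thesis unfolding \<rho>_def by linarith
qed

lemma X_statistic_window:
  fixes \<phi> \<theta> \<delta> :: real
  defines "\<rho>\<^sub>0 \<equiv> (1 - (\<theta> - \<delta>)) / (\<theta> - \<delta>) * (\<phi> / (1 - \<phi>))"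
  assumes \<phi>\<theta>: "0 < \<phi>" "\<phi> < \<theta>" "\<theta> < 1"
    and \<delta>: "0 < \<delta>" "\<delta> \<le> \<theta>/2" "\<delta> \<le> (1-\<theta>)/2" "\<delta> \<le> (\<theta>-\<phi>)/2"
  shows "eventually (\<lambda>n. \<forall>k\<le>n. \<bar>real k / real n - \<theta>\<bar> \<le> \<delta> \<longrightarrow>
     \<bar>X_statistic \<phi> \<theta> n (real k / real n)
       + sqrt (real n) * (- (1/(\<theta>-\<phi>) - 1/(2*\<theta>) - 1/(2*(1-\<theta>)))) * (real k / real n - \<theta>)\<bar>
     \<le> (2/(\<theta>-\<phi>)^2 + 1/\<theta>^2 + 1/(1-\<theta>)^2) * sqrt (real n) * (real k / real n - \<theta>)^2
       + sqrt (real n) * ((2/real n + 4/(\<theta>*real n) + 4/((1-\<theta>)*real n))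
         + (4 * real n powr (1/4) / (\<theta> * (1 - \<theta>) * real n) / (1 - \<rho>\<^sub>0)
           + 2 * \<rho>\<^sub>0 powr (real n powr (1/4))))) sequentially"
proof -
  have \<theta>: "0 < \<theta>" "0 < 1 - \<theta>" using \<phi>\<theta> by auto
  have t\<^sub>0: "0 < \<phi>" "\<phi> < \<theta> - \<delta>" "\<theta> - \<delta> < 1" using \<phi>\<theta> \<delta> by auto
  have \<rho>\<^sub>0: "0 < \<rho>\<^sub>0" "\<rho>\<^sub>0 < 1" unfolding \<rho>\<^sub>0_def using odds_ratio_bounds[OF t\<^sub>0] by auto
  have "eventually (\<lambda>n. 2 \<le> \<theta> * real n \<and> 2 \<le> (1 - \<theta>) * real n
      \<and> real n powr (1/4) \<le> (1 - \<theta>) * real n / 2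
      \<and> 4 * real n powr (1/4) / (\<theta> * (1 - \<theta>) * real n) \<le> 1
      \<and> \<rho>\<^sub>0 powr (real n powr (1/4)) \<le> 1/2) sequentially"
    using \<theta> \<rho>\<^sub>0 by (intro eventually_conj) real_asymp+
  then show ?thesis
  proof (rule eventually_mono, intro allI impI)
    fix n k assume large: "2 \<le> \<theta> * real n \<and> 2 \<le> (1 - \<theta>) * real n
      \<and> real n powr (1/4) \<le> (1 - \<theta>) * real n / 2
      \<and> 4 * real n powr (1/4) / (\<theta> * (1 - \<theta>) * real n) \<le> 1
      \<and> \<rho>\<^sub>0 powr (real n powr (1/4)) \<le> 1/2"
      and k: "k \<le> n" "\<bar>real k / real n - \<theta>\<bar> \<le> \<delta>"
    note counts = window_counts[OF \<theta>(1) \<phi>\<theta>(3) \<delta>(2,3) large[THEN conjunct1]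
      large[THEN conjunct2, THEN conjunct1] k]
    define t where "t = real k / real n"
    have t: "\<theta> - \<delta> \<le> t" "\<phi> < t" "\<bar>t - \<theta>\<bar> \<le> \<theta>/2" "\<bar>t - \<theta>\<bar> \<le> (1-\<theta>)/2" "\<bar>t - \<theta>\<bar> \<le> (\<theta>-\<phi>)/2"
      using k(2) \<delta> t\<^sub>0 unfolding t_def by linarith+
    have n0: "0 < n" using counts(4) by simp
    from large have "real n powr (1/4) \<le> (1 - \<theta>) * real n / 2"
      "4 * real n powr (1/4) / (\<theta> * (1 - \<theta>) * real n) \<le> 1"
      "\<rho>\<^sub>0 powr (real n powr (1/4)) \<le> 1/2" by auto
    from ln_binom_tail_window_error[OF t\<^sub>0 \<theta>(1) \<phi>\<theta>(3) counts(3,4) t(1)[unfolded t_def] counts(1,2)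
        this(1,2) this(3)[unfolded \<rho>\<^sub>0_def]]
    have "\<bar>ln (P_X n t \<phi>) - ln (binom_term n \<phi> k) + ln (1 - real (n - k) / real k * (\<phi> / (1 - \<phi>)))\<bar>
      \<le> 4 * real n powr (1/4) / (\<theta> * (1 - \<theta>) * real n) / (1 - \<rho>\<^sub>0) + 2 * \<rho>\<^sub>0 powr (real n powr (1/4))"
      unfolding t_def P_X_lattice[OF n0] \<rho>\<^sub>0_def .
    note lin = ln_X_ratio_linearization[OF \<phi>\<theta> counts(3,4) t_def t(2-5) this]
    have "\<bar>X_statistic \<phi> \<theta> n t + sqrt (real n) * (- (1/(\<theta>-\<phi>) - 1/(2*\<theta>) - 1/(2*(1-\<theta>)))) * (t - \<theta>)\<bar>
        = sqrt (real n) * \<bar>ln ((\<theta> - \<phi>) / (1 - \<phi>) * sqrt (2 * pi * (1 - \<theta>) / \<theta>) * (sqrt (real n) * P_X n t \<phi>) / P_CH n t \<phi>)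
          + (1/(\<theta>-\<phi>) - 1/(2*\<theta>) - 1/(2*(1-\<theta>))) * (t - \<theta>)\<bar>"
      unfolding X_statistic_def by (rule abs_neg_sqrt_mult_add)
    also have "\<dots> \<le> sqrt (real n) * ((2/(\<theta>-\<phi>)^2 + 1/\<theta>^2 + 1/(1-\<theta>)^2) * (t - \<theta>)^2
        + ((2/real n + 4/(\<theta>*real n) + 4/((1-\<theta>)*real n))
         + (4 * real n powr (1/4) / (\<theta> * (1 - \<theta>) * real n) / (1 - \<rho>\<^sub>0)
           + 2 * \<rho>\<^sub>0 powr (real n powr (1/4)))))"
      using lin counts(5) by (intro mult_left_mono) auto
    finally show "\<bar>X_statistic \<phi> \<theta> n t
       + sqrt (real n) * (- (1/(\<theta>-\<phi>) - 1/(2*\<theta>) - 1/(2*(1-\<theta>)))) * (t - \<theta>)\<bar>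
     \<le> (2/(\<theta>-\<phi>)^2 + 1/\<theta>^2 + 1/(1-\<theta>)^2) * sqrt (real n) * (t - \<theta>)^2
       + sqrt (real n) * ((2/real n + 4/(\<theta>*real n) + 4/((1-\<theta>)*real n))
         + (4 * real n powr (1/4) / (\<theta> * (1 - \<theta>) * real n) / (1 - \<rho>\<^sub>0)
           + 2 * \<rho>\<^sub>0 powr (real n powr (1/4))))"
      by (simp add: algebra_simps)
  qed
qed

context bernoulli_sequence
begin

lemma PBR_statistic_clt:
  assumes \<phi>: "0 < \<phi>" "\<phi> < \<theta>" and half: "\<theta> \<noteq> 1/2"
  shows "weak_conv_m (\<lambda>n. distr M borel (\<lambda>\<omega>. PBR_statistic \<phi> \<theta> n ((\<Sum>i<n. B i \<omega>) / real n)))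
    (normal_distribution 0 ((1 - 2 * \<theta>)\<^sup>2 / (4 * \<theta> * (1 - \<theta>))))"
proof -
  have \<theta>: "0 < \<theta>" "0 < 1 - \<theta>" using \<theta>_pos \<theta>_less_1 by auto
  define \<delta> where "\<delta> = min (min (\<theta>/2) ((1-\<theta>)/2)) ((\<theta>-\<phi>)/2)"
  have \<delta>: "0 < \<delta>" "\<delta> \<le> \<theta>/2" "\<delta> \<le> (1-\<theta>)/2" "\<delta> \<le> \<theta> - \<phi>"
    unfolding \<delta>_def using \<theta> \<phi> by (auto simp: min_def)
  define D where "D = - ((1/\<theta> - 1/(1-\<theta>)) / 2)"
  have D: "D = (2*\<theta> - 1) / (2*\<theta>*(1-\<theta>))" unfolding D_def using \<theta> by (simp add: field_simps)
  then have "D \<noteq> 0" using \<theta> half by simp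
  moreover have "(\<lambda>t. PBR_statistic \<phi> \<theta> n t) \<in> borel_measurable borel" for n
    unfolding PBR_statistic_def P_PBR_def P_CH_def Let_def by measurable
  moreover have "(\<lambda>n. sqrt (real n) * (1/real n + (2/real n + 4/(\<theta>*real n) + 4/((1-\<theta>)*real n)))) \<longlonglongrightarrow> 0"
    using \<theta> by real_asymp
  ultimately have "weak_conv_m (\<lambda>n. distr M borel (\<lambda>\<omega>. PBR_statistic \<phi> \<theta> n ((\<Sum>i<n. B i \<omega>) / real n)))
      (normal_distribution 0 (D^2 * (\<theta> * (1 - \<theta>))))"
    using PBR_statistic_window[OF \<phi> \<theta>_less_1 \<delta>(2-4)] unfolding D_def
    by (intro delta_method[OF _ _ \<delta>(1)]) (auto simp: D_def)
  moreover have "D^2 * (\<theta> * (1 - \<theta>)) = ((2*\<theta> - 1)^2 * (\<theta> * (1 - \<theta>))) / ((2*\<theta>*(1-\<theta>))^2)"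
    unfolding D by (simp add: power_divide)
  moreover have "\<dots> = (1 - 2 * \<theta>)\<^sup>2 / (4 * \<theta> * (1 - \<theta>))"
    using \<theta> by (simp add: frac_eq_eq power2_eq_square) algebra
  ultimately show ?thesis by simp
qed

lemma X_statistic_clt:
  assumes \<phi>: "0 < \<phi>" "\<phi> < \<theta>" and nondegenerate: "\<phi> \<noteq> \<theta> * (2 * \<theta> - 1)"
  shows "weak_conv_m (\<lambda>n. distr M borel (\<lambda>\<omega>. X_statistic \<phi> \<theta> n ((\<Sum>i<n. B i \<omega>) / real n)))
    (normal_distribution 0 ((\<theta> * (1 - 2 * \<theta>) + \<phi>)\<^sup>2 / (4 * (\<theta> - \<phi>)\<^sup>2 * \<theta> * (1 - \<theta>))))"
proof -
  have \<theta>: "0 < \<theta>" "0 < 1 - \<theta>" "0 < \<theta> - \<phi>" using \<theta>_pos \<theta>_less_1 \<phi> by auto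
  define \<delta> where "\<delta> = min (min (\<theta>/2) ((1-\<theta>)/2)) ((\<theta>-\<phi>)/2)"
  have \<delta>: "0 < \<delta>" "\<delta> \<le> \<theta>/2" "\<delta> \<le> (1-\<theta>)/2" "\<delta> \<le> (\<theta>-\<phi>)/2"
    unfolding \<delta>_def using \<theta> by (auto simp: min_def)
  define \<rho>\<^sub>0 where "\<rho>\<^sub>0 = (1 - (\<theta> - \<delta>)) / (\<theta> - \<delta>) * (\<phi> / (1 - \<phi>))"
  have \<rho>\<^sub>0: "0 < \<rho>\<^sub>0" "\<rho>\<^sub>0 < 1" unfolding \<rho>\<^sub>0_def using \<phi> \<theta> \<delta> by (intro odds_ratio_bounds; simp)+
  define D where "D = - (1/(\<theta>-\<phi>) - 1/(2*\<theta>) - 1/(2*(1-\<theta>)))"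
  have "1/(2*\<theta>) + 1/(2*(1-\<theta>)) = 1/(2*\<theta>*(1-\<theta>))" using \<theta> by (simp add: field_simps)
  then have "1/(\<theta>-\<phi>) - 1/(2*\<theta>) - 1/(2*(1-\<theta>)) = 1/(\<theta>-\<phi>) - 1/(2*\<theta>*(1-\<theta>))"
    by (simp add: diff_diff_eq)
  also have "\<dots> = (2*\<theta>*(1-\<theta>) - (\<theta>-\<phi>)) / ((\<theta>-\<phi>) * (2*\<theta>*(1-\<theta>)))"
    using \<theta> by (simp add: diff_frac_eq)
  also have "\<dots> = (\<theta> * (1 - 2 * \<theta>) + \<phi>) / (2 * \<theta> * (1 - \<theta>) * (\<theta> - \<phi>))"
    by (intro arg_cong2[where f="(/)"]) (simp_all add: algebra_simps)
  finally have D: "D = - ((\<theta> * (1 - 2 * \<theta>) + \<phi>) / (2 * \<theta> * (1 - \<theta>) * (\<theta> - \<phi>)))"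
    unfolding D_def by simp
  have "\<theta> * (1 - 2 * \<theta>) + \<phi> \<noteq> 0" using nondegenerate by (auto simp: algebra_simps)
  then have "D \<noteq> 0" unfolding D using \<theta> by simp
  moreover have "(\<lambda>t. X_statistic \<phi> \<theta> n t) \<in> borel_measurable borel" for n
    unfolding X_statistic_def P_X_def P_CH_def Let_def by measurable
  moreover have "(\<lambda>n. sqrt (real n) * ((2/real n + 4/(\<theta>*real n) + 4/((1-\<theta>)*real n))
      + (4 * real n powr (1/4) / (\<theta> * (1 - \<theta>) * real n) / (1 - \<rho>\<^sub>0)
        + 2 * \<rho>\<^sub>0 powr (real n powr (1/4))))) \<longlonglongrightarrow> 0"
    using \<theta> \<rho>\<^sub>0 by real_asymp
  ultimately have "weak_conv_m (\<lambda>n. distr M borel (\<lambda>\<omega>. X_statistic \<phi> \<theta> n ((\<Sum>i<n. B i \<omega>) / real n)))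
      (normal_distribution 0 (D^2 * (\<theta> * (1 - \<theta>))))"
    using X_statistic_window[OF \<phi> \<theta>_less_1 \<delta>] unfolding \<rho>\<^sub>0_def[symmetric]
    by (intro delta_method[OF _ _ \<delta>(1)]) (auto simp: D_def)
  moreover have "D^2 * (\<theta> * (1 - \<theta>))
      = ((\<theta> * (1 - 2 * \<theta>) + \<phi>)^2 * (\<theta> * (1 - \<theta>))) / ((2 * \<theta> * (1 - \<theta>) * (\<theta> - \<phi>))^2)"
    unfolding D by (simp add: power_divide)
  moreover have "\<dots> = (\<theta> * (1 - 2 * \<theta>) + \<phi>)\<^sup>2 / (4 * (\<theta> - \<phi>)\<^sup>2 * \<theta> * (1 - \<theta>))"
    using \<theta> by (simp add: frac_eq_eq power2_eq_square)
  ultimately show ?thesis by simp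
qed

end

theorem mainTheorem10:
  fixes M :: "'a measure" and B :: "nat \<Rightarrow> 'a \<Rightarrow> real" and \<phi> \<theta> :: real
  assumes "prob_space M"
    and "0 < \<phi>" and "\<phi> < \<theta>" and "\<theta> < 1"
    and meas: "\<And>i. B i \<in> borel_measurable M"
    and indep: "prob_space.indep_vars M (\<lambda>_. borel) B UNIV"
    and bern01: "\<And>i. AE \<omega> in M. B i \<omega> = 0 \<or> B i \<omega> = 1"
    and bernp: "\<And>i. measure M {\<omega> \<in> space M. B i \<omega> = 1} = \<theta>"
  defines "Th \<equiv> \<lambda>n \<omega>. (\<Sum>i<n. B i \<omega>) / real n"
  shows "(\<theta> \<noteq> 1/2 \<longrightarrow>
           weak_conv_m
             (\<lambda>n. distr M borel (\<lambda>\<omega>. - sqrt (real n) *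
                ln (sqrt (2 * pi * \<theta> * (1 - \<theta>)) * P_PBR n (Th n \<omega>) \<phi>
                    / (sqrt (real n) * P_CH n (Th n \<omega>) \<phi>))))
             (normal_distribution 0 ((1 - 2 * \<theta>)\<^sup>2 / (4 * \<theta> * (1 - \<theta>)))))
       \<and> (\<phi> \<noteq> \<theta> * (2 * \<theta> - 1) \<longrightarrow>
           weak_conv_m
             (\<lambda>n. distr M borel (\<lambda>\<omega>. - sqrt (real n) *
                ln ((\<theta> - \<phi>) / (1 - \<phi>) * sqrt (2 * pi * (1 - \<theta>) / \<theta>)
                    * (sqrt (real n) * P_X n (Th n \<omega>) \<phi>) / P_CH n (Th n \<omega>) \<phi>)))
             (normal_distribution 0 ((\<theta> * (1 - 2 * \<theta>) + \<phi>)\<^sup>2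
                / (4 * (\<theta> - \<phi>)\<^sup>2 * \<theta> * (1 - \<theta>)))))"
proof -
  interpret bernoulli_sequence M B \<theta>
    by (intro bernoulli_sequence.intro bernoulli_sequence_axioms.intro) (use assms in auto)
  show ?thesis
    using PBR_statistic_clt[OF assms(2,3)] X_statistic_clt[OF assms(2,3)]
    unfolding Th_def PBR_statistic_def X_statistic_def by blast
qed

end
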